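(* Let $k$ be a field of characteristic $p>0$ (residue field of a complete discrete valuation ring $\mathcal{O}$ of characteristic $0$). Let $G$ be a finite group, $N$ a normal subgroup of $G$, and $Q$ a $p$-subgroup of $G$. Let $K=\{\varphi\in\operatorname{Aut}(Q)\mid \varphi(u)\in uN\text{ for all }u\in Q\}$ and let $N_G^K(Q)=\{x\in N_G(Q)\mid \varphi_x\in K\}$, where $\varphi_x(u)=xux^{-1}$. Then there exists an isomorphism \[\psi^K: kN_G^K(Q)\longrightarrow \bar N^K_{kG}(Q)\] of $N_G^K(Q)/C_N(Q)$-graded $N_G^K(Q)$-interior $N_G(Q)$-algebras.
   Context: For $\varphi\in K$ let $\Delta_\varphi(Q)=\{(\varphi(u),u)\mid u\in Q\}\le Q\times Q$, acting on $\mathcal{O}G$ by $(v,u)\cdot a=vau^{-1}$. Let $(\mathcal{O}G)^{\Delta_\varphi(Q)}$ be the fixed points and $\bar N^\varphi_{kG}(Q)=(\mathcal{O}G)(\Delta_\varphi(Q))$ the Brauer quotient, i.e. the quotient of $(\mathcal{O}G)^{\Delta_\varphi(Q)}$ by $\sum_{R<\Delta_\varphi(Q)}\operatorname{Tr}_R^{\Delta_\varphi(Q)}((\mathcal{O}G)^R)+\mathrm{J}(\mathcal{O})(\mathcal{O}G)^{\Delta_\varphi(Q)}$, with canonical map $\operatorname{Br}_{\Delta_\varphi(Q)}$. The extended Brauer quotient is $\bar N^K_{kG}(Q)=\bigoplus_{\varphi\in K}\bar N^\varphi_{kG}(Q)$, with multiplication $\operatorname{Br}_{\Delta_\varphi(Q)}(a)\operatorname{Br}_{\Delta_\psi(Q)}(c)=\operatorname{Br}_{\Delta_{\varphi\psi}(Q)}(ac)$.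 It is $N_G^K(Q)$-interior via $x\mapsto\operatorname{Br}_{\Delta_{\varphi_x}(Q)}(x)$, and an $N_G(Q)$-algebra via $y\in N_G(Q)$ sending $\operatorname{Br}_{\Delta_\varphi(Q)}(a)$ to $\operatorname{Br}_{\Delta_{\varphi^y}(Q)}(y^{-1}ay)$, where $\varphi^y(u)=y^{-1}\varphi(yuy^{-1})y$. Its $N_G^K(Q)/C_N(Q)$-grading: the component of degree $zC_N(Q)$ ($z\in N_G^K(Q)$) is $\operatorname{Br}_{\Delta_{\varphi_z}(Q)}\big((\mathcal{O}Nz)^{\Delta_{\varphi_z}(Q)}\big)$. The group algebra $kN_G^K(Q)$ is $N_G^K(Q)/C_N(Q)$-graded with component $kC_N(Q)z$ in degree $zC_N(Q)$, is $N_G^K(Q)$-interior via the inclusion, and is an $N_G(Q)$-algebra via conjugation ($N_G^K(Q)$ is normal in $N_G(Q)$). *)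

theory Defs
  imports "HOL-Algebra.Group_Action" "HOL-Algebra.Bij" "HOL-Computational_Algebra.Primes"
begin

definition jac_rad :: "'o::comm_ring_1 set" where
  "jac_rad = {j. \<forall>x. (1 - x * j) dvd 1}"

definition complete_dvr :: "'o::idom itself \<Rightarrow> bool" where
  "complete_dvr _ \<longleftrightarrow> (\<exists>pi::'o. pi \<noteq> 0 \<and> \<not> pi dvd 1 \<and>
      (\<forall>x. x \<noteq> 0 \<longrightarrow> (\<exists>u n. u dvd 1 \<and> x = u * pi ^ n)) \<and>
      (\<forall>s::nat \<Rightarrow> 'o. (\<forall>n. pi ^ n dvd (s (Suc n) - s n)) \<longrightarrow>
          (\<exists>a. \<forall>n. pi ^ n dvd (a - s n))))"

definition residue_map :: "('o::comm_ring_1 \<Rightarrow> 'k::field) \<Rightarrow> bool" where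
  "residue_map res \<longleftrightarrow> res 1 = 1 \<and> (\<forall>a b. res (a + b) = res a + res b) \<and>
      (\<forall>a b. res (a * b) = res a * res b) \<and> surj res \<and> {a. res a = 0} = jac_rad"

definition conj_aut :: "('g, 'b) monoid_scheme \<Rightarrow> 'g \<Rightarrow> 'g set \<Rightarrow> ('g \<Rightarrow> 'g)" where
  "conj_aut G x Q = (\<lambda>u\<in>Q. x \<otimes>\<^bsub>G\<^esub> u \<otimes>\<^bsub>G\<^esub> inv\<^bsub>G\<^esub> x)"

definition Kgrp :: "('g, 'b) monoid_scheme \<Rightarrow> 'g set \<Rightarrow> 'g set \<Rightarrow> ('g \<Rightarrow> 'g) set" where
  "Kgrp G N Q = {\<phi> \<in> auto (G\<lparr>carrier := Q\<rparr>). \<forall>u\<in>Q. \<phi> u \<in> u <#\<^bsub>G\<^esub> N}"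

definition NK :: "('g, 'b) monoid_scheme \<Rightarrow> 'g set \<Rightarrow> 'g set \<Rightarrow> 'g set" where
  "NK G N Q = {x \<in> normalizer G Q. conj_aut G x Q \<in> Kgrp G N Q}"

definition CN :: "('g, 'b) monoid_scheme \<Rightarrow> 'g set \<Rightarrow> 'g set \<Rightarrow> 'g set" where
  "CN G N Q = {x \<in> N. \<forall>u\<in>Q. x \<otimes>\<^bsub>G\<^esub> u = u \<otimes>\<^bsub>G\<^esub> x}"

definition phi_conj :: "('g, 'b) monoid_scheme \<Rightarrow> 'g set \<Rightarrow> 'g \<Rightarrow> ('g \<Rightarrow> 'g) \<Rightarrow> ('g \<Rightarrow> 'g)" where
  "phi_conj G Q y \<phi> = (\<lambda>u\<in>Q. inv\<^bsub>G\<^esub> y \<otimes>\<^bsub>G\<^esub> \<phi> (y \<otimes>\<^bsub>G\<^esub> u \<otimes>\<^bsub>G\<^esub> inv\<^bsub>G\<^esub> y) \<otimes>\<^bsub>G\<^esub> y)"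

definition OG :: "('g, 'b) monoid_scheme \<Rightarrow> ('g \<Rightarrow> 'o::comm_ring_1) set" where
  "OG G = {a. \<forall>g. g \<notin> carrier G \<longrightarrow> a g = 0}"

definition gdelta :: "'g \<Rightarrow> ('g \<Rightarrow> 'r::comm_ring_1)" where
  "gdelta x = (\<lambda>g. if g = x then 1 else 0)"

definition gconv :: "('g, 'b) monoid_scheme \<Rightarrow> ('g \<Rightarrow> 'o::comm_ring_1) \<Rightarrow> ('g \<Rightarrow> 'o) \<Rightarrow> ('g \<Rightarrow> 'o)" where
  "gconv G a c = (\<lambda>x. if x \<in> carrier G then (\<Sum>y\<in>carrier G. a y * c (inv\<^bsub>G\<^esub> y \<otimes>\<^bsub>G\<^esub> x)) else 0)"

text \<open>(v,u) . a = v a u^-1, i.e. the coefficient at g is a(v^-1 g u).\<close>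
definition biact :: "('g, 'b) monoid_scheme \<Rightarrow> 'g \<times> 'g \<Rightarrow> ('g \<Rightarrow> 'o::comm_ring_1) \<Rightarrow> ('g \<Rightarrow> 'o)" where
  "biact G vu a = (\<lambda>g. if g \<in> carrier G
      then a (inv\<^bsub>G\<^esub> (fst vu) \<otimes>\<^bsub>G\<^esub> g \<otimes>\<^bsub>G\<^esub> snd vu) else 0)"

definition Delta :: "('g \<Rightarrow> 'g) \<Rightarrow> 'g set \<Rightarrow> ('g \<times> 'g) set" where
  "Delta \<phi> Q = {(\<phi> u, u) | u. u \<in> Q}"

definition fixpts :: "('g, 'b) monoid_scheme \<Rightarrow> ('g \<times> 'g) set \<Rightarrow> ('g \<Rightarrow> 'o::comm_ring_1) set" where
  "fixpts G R = {a \<in> OG G. \<forall>r\<in>R. biact G r a = a}"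

definition trace :: "('g, 'b) monoid_scheme \<Rightarrow> ('g \<times> 'g) set \<Rightarrow> ('g \<times> 'g) set
    \<Rightarrow> ('g \<Rightarrow> 'o::comm_ring_1) \<Rightarrow> ('g \<Rightarrow> 'o)" where
  "trace G D R a = (\<lambda>g. \<Sum>C\<in>{t <#\<^bsub>G \<times>\<times> G\<^esub> R | t. t \<in> D}. biact G (SOME t. t \<in> C) a g)"

definition lin_span :: "('g \<Rightarrow> 'o::comm_ring_1) set \<Rightarrow> ('g \<Rightarrow> 'o) set" where
  "lin_span S = {(\<lambda>x. \<Sum>a\<in>T. r a * a x) | T r. finite T \<and> T \<subseteq> S}"

text \<open>The kernel of Br_{Delta_phi(Q)}: sum of the Tr_R^Delta((OG)^R), R < Delta,
  plus J(O) (OG)^Delta.\<close>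
definition brauer_ker :: "('g, 'b) monoid_scheme \<Rightarrow> 'g set \<Rightarrow> ('g \<Rightarrow> 'g) \<Rightarrow> ('g \<Rightarrow> 'o::comm_ring_1) set" where
  "brauer_ker G Q \<phi> = lin_span
     ((\<Union>R\<in>{R. subgroup R (G \<times>\<times> G) \<and> R \<subset> Delta \<phi> Q}. trace G (Delta \<phi> Q) R ` fixpts G R)
      \<union> {(\<lambda>g. j * a g) | j a. j \<in> jac_rad \<and> a \<in> fixpts G (Delta \<phi> Q)})"

definition br_fam :: "('g, 'b) monoid_scheme \<Rightarrow> 'g set \<Rightarrow> 'g set
    \<Rightarrow> (('g \<Rightarrow> 'g) \<Rightarrow> ('g \<Rightarrow> 'o::comm_ring_1)) set" where
  "br_fam G N Q = {F. \<forall>\<phi>\<in>Kgrp G N Q. F \<phi> \<in> fixpts G (Delta \<phi> Q)}"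

text \<open>The element (Br_{Delta_phi(Q)}(F phi))_{phi in K} of the direct sum; each Brauer class is
  represented as the coset F phi + ker.\<close>
definition br_cls :: "('g, 'b) monoid_scheme \<Rightarrow> 'g set \<Rightarrow> 'g set
    \<Rightarrow> (('g \<Rightarrow> 'g) \<Rightarrow> ('g \<Rightarrow> 'o::comm_ring_1)) \<Rightarrow> (('g \<Rightarrow> 'g) \<Rightarrow> ('g \<Rightarrow> 'o) set)" where
  "br_cls G N Q F = (\<lambda>\<phi>. if \<phi> \<in> Kgrp G N Q
      then {(\<lambda>g. F \<phi> g + i g) | i. i \<in> brauer_ker G Q \<phi>} else {})"

definition ext_brauer :: "('g, 'b) monoid_scheme \<Rightarrow> 'g set \<Rightarrow> 'g set
    \<Rightarrow> (('g \<Rightarrow> 'g) \<Rightarrow> ('g \<Rightarrow> 'o::comm_ring_1) set) set" where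
  "ext_brauer G N Q = br_cls G N Q ` br_fam G N Q"

text \<open>Product on representatives: Br_phi(a) Br_psi(c) = Br_{phi psi}(a c).\<close>
definition fam_mult :: "('g, 'b) monoid_scheme \<Rightarrow> 'g set \<Rightarrow> 'g set
    \<Rightarrow> (('g \<Rightarrow> 'g) \<Rightarrow> ('g \<Rightarrow> 'o::comm_ring_1)) \<Rightarrow> (('g \<Rightarrow> 'g) \<Rightarrow> ('g \<Rightarrow> 'o))
    \<Rightarrow> (('g \<Rightarrow> 'g) \<Rightarrow> ('g \<Rightarrow> 'o))" where
  "fam_mult G N Q F H = (\<lambda>\<phi> x. \<Sum>(\<chi>, \<omega>)\<in>{(\<chi>, \<omega>). \<chi> \<in> Kgrp G N Q \<and> \<omega> \<in> Kgrp G N Q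
        \<and> compose Q \<chi> \<omega> = \<phi>}. gconv G (F \<chi>) (H \<omega>) x)"

text \<open>Action of y in N_G(Q): Br_phi(a) goes to Br_{phi^y}(y^-1 a y); on representatives
  the new family at chi is y^-1 F(chi^{y^-1}) y.\<close>
definition fam_act :: "('g, 'b) monoid_scheme \<Rightarrow> 'g set \<Rightarrow> 'g
    \<Rightarrow> (('g \<Rightarrow> 'g) \<Rightarrow> ('g \<Rightarrow> 'o::comm_ring_1)) \<Rightarrow> (('g \<Rightarrow> 'g) \<Rightarrow> ('g \<Rightarrow> 'o))" where
  "fam_act G Q y F = (\<lambda>\<chi> g. if g \<in> carrier G
      then F (phi_conj G Q (inv\<^bsub>G\<^esub> y) \<chi>) (y \<otimes>\<^bsub>G\<^esub> g \<otimes>\<^bsub>G\<^esub> inv\<^bsub>G\<^esub> y) else 0)"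

text \<open>Homogeneous component of degree z C_N(Q) of the extended Brauer quotient:
  Br_{Delta_{phi_z}(Q)}((O N z)^{Delta_{phi_z}(Q)}) placed in the summand phi_z.\<close>
definition ext_brauer_comp :: "('g, 'b) monoid_scheme \<Rightarrow> 'g set \<Rightarrow> 'g set \<Rightarrow> 'g
    \<Rightarrow> (('g \<Rightarrow> 'g) \<Rightarrow> ('g \<Rightarrow> 'o::comm_ring_1) set) set" where
  "ext_brauer_comp G N Q z = {br_cls G N Q F | F. F \<in> br_fam G N Q
      \<and> (\<forall>\<phi>. \<phi> \<noteq> conj_aut G z Q \<longrightarrow> F \<phi> = (\<lambda>_. 0))
      \<and> (\<forall>g. g \<notin> N #>\<^bsub>G\<^esub> z \<longrightarrow> F (conj_aut G z Q) g = 0)}"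

definition kNK :: "('g, 'b) monoid_scheme \<Rightarrow> 'g set \<Rightarrow> 'g set \<Rightarrow> ('g \<Rightarrow> 'k::field) set" where
  "kNK G N Q = {f. \<forall>x. x \<notin> NK G N Q \<longrightarrow> f x = 0}"

definition kconv :: "('g, 'b) monoid_scheme \<Rightarrow> 'g set \<Rightarrow> 'g set
    \<Rightarrow> ('g \<Rightarrow> 'k::field) \<Rightarrow> ('g \<Rightarrow> 'k) \<Rightarrow> ('g \<Rightarrow> 'k)" where
  "kconv G N Q f h = (\<lambda>x. if x \<in> NK G N Q
      then (\<Sum>y\<in>NK G N Q. f y * h (inv\<^bsub>G\<^esub> y \<otimes>\<^bsub>G\<^esub> x)) else 0)"

text \<open>Conjugation action of y: y^-1 f y, coefficient at x is f(y x y^-1).\<close>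
definition kact :: "('g, 'b) monoid_scheme \<Rightarrow> 'g set \<Rightarrow> 'g set \<Rightarrow> 'g
    \<Rightarrow> ('g \<Rightarrow> 'k::field) \<Rightarrow> ('g \<Rightarrow> 'k)" where
  "kact G N Q y f = (\<lambda>x. if x \<in> NK G N Q then f (y \<otimes>\<^bsub>G\<^esub> x \<otimes>\<^bsub>G\<^esub> inv\<^bsub>G\<^esub> y) else 0)"

definition kNK_comp :: "('g, 'b) monoid_scheme \<Rightarrow> 'g set \<Rightarrow> 'g set \<Rightarrow> 'g \<Rightarrow> ('g \<Rightarrow> 'k::field) set" where
  "kNK_comp G N Q z = {f \<in> kNK G N Q. \<forall>x. x \<notin> CN G N Q #>\<^bsub>G\<^esub> z \<longrightarrow> f x = 0}"

end

theory Submission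
  imports Defs "HOL-Algebra.Left_Coset"
begin

text \<open>The isomorphism sends \<open>x \<in> N\<^sub>G\<^sup>K(Q)\<close> to the Brauer class of \<open>x\<close> in the summand
  indexed by \<open>\<phi>\<^sub>x\<close>. Everything rests on a description of the kernel of
  \<open>Br\<^bsub>\<Delta>\<^sub>\<phi>(Q)\<^esub>\<close>: a \<open>\<Delta>\<^sub>\<phi>(Q)\<close>-fixed element \<open>a\<close> of \<open>OG\<close> lies in it iff
  \<open>a(x) \<in> J(O)\<close> for every \<open>x\<close> with \<open>\<phi>\<^sub>x = \<phi>\<close>. Let \<open>Q\<close> act on \<open>G\<close> by
  \<open>u \<cdot> g = \<phi>(u) g u\<^sup>-\<^sup>1\<close>; its fixed points are exactly the \<open>x\<close> with \<open>\<phi>\<^sub>x = \<phi>\<close>.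
  A fixed element is constant on orbits, and the indicator of a non-trivial orbit
  through \<open>x\<close> is the relative trace of \<open>x\<close> from the stabiliser of \<open>x\<close>, a proper
  subgroup of \<open>\<Delta>\<^sub>\<phi>(Q)\<close>. Conversely a relative trace from a proper subgroup
  multiplies the coefficient at a fixed point by an index divisible by \<open>p\<close>.
  So a family of fixed elements is determined modulo the kernels by its reduced
  coefficients on \<open>N\<^sub>G\<^sup>K(Q)\<close>, and each structure map of the extended Brauer
  quotient becomes the corresponding one of \<open>kN\<^sub>G\<^sup>K(Q)\<close>. For products this uses
  once more that modulo \<open>p\<close> a sum over a set with a \<open>p\<close>-group action only sees
  the fixed points.\<close>

context
  fixes res :: "'o::comm_ring_1 \<Rightarrow> 'k::field"
  assumes res: "residue_map res"
begin

lemma residue_map_add: "res (a + b) = res a + res b"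
  using res by (simp add: residue_map_def)

lemma residue_map_mult: "res (a * b) = res a * res b"
  using res by (simp add: residue_map_def)

lemma residue_map_one: "res 1 = 1"
  using res by (simp add: residue_map_def)

lemma residue_map_zero: "res 0 = 0"
  using residue_map_add[of 0 0] by (metis add_cancel_right_right)

lemma residue_map_diff: "res (a - b) = res a - res b"
  using residue_map_add[of "a - b" b] by (simp add: eq_diff_eq)

lemma residue_map_sum: "res (sum f A) = (\<Sum>x\<in>A. res (f x))"
  by (induction A rule: infinite_finite_induct) (auto simp: residue_map_zero residue_map_add)

lemma residue_map_of_nat: "res (of_nat m) = of_nat m"
  by (induction m) (auto simp: residue_map_zero residue_map_add residue_map_one)

lemma residue_map_eq_0_iff: "res a = 0 \<longleftrightarrow> a \<in> jac_rad"
  using res unfolding residue_map_def by blast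

end

definition res_lift :: "('o::comm_ring_1 \<Rightarrow> 'k::field) \<Rightarrow> 'k \<Rightarrow> 'o" where
  "res_lift res c = (if c = 0 then 0 else SOME a. res a = c)"

lemma residue_map_res_lift:
  assumes "residue_map res" shows "res (res_lift res c) = c"
proof -
  have "\<exists>a. res a = c" using assms unfolding residue_map_def by (metis surjD)
  thus ?thesis unfolding res_lift_def using residue_map_zero[OF assms] by (auto intro: someI_ex)
qed

lemma res_lift_0 [simp]: "res_lift res 0 = 0"
  by (simp add: res_lift_def)

lemma lin_span_zero: "(\<lambda>_. 0) \<in> lin_span S"
  unfolding lin_span_def by (rule CollectI, rule exI[of _ "{}"]) auto

lemma lin_span_smult_mem: "s \<in> S \<Longrightarrow> (\<lambda>x. c * s x) \<in> lin_span S"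
  unfolding lin_span_def by (rule CollectI, rule exI[of _ "{s}"], rule exI[of _ "\<lambda>_. c"]) auto

lemma lin_span_mem: "s \<in> S \<Longrightarrow> s \<in> lin_span S"
  using lin_span_smult_mem[of s S 1] by simp

lemma lin_span_smult: "a \<in> lin_span S \<Longrightarrow> (\<lambda>x. c * a x) \<in> lin_span S"
proof -
  assume "a \<in> lin_span S"
  then obtain T r where T: "finite T" "T \<subseteq> S" and a: "a = (\<lambda>x. \<Sum>b\<in>T. r b * b x)"
    unfolding lin_span_def by blast
  have "(\<lambda>x. c * a x) = (\<lambda>x. \<Sum>b\<in>T. (c * r b) * b x)"
    unfolding a by (simp add: sum_distrib_left mult.assoc)
  thus ?thesis using T unfolding lin_span_def
    by (intro CollectI exI[of _ T] exI[of _ "\<lambda>b. c * r b"]) auto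
qed

lemma lin_span_add: "a \<in> lin_span S \<Longrightarrow> b \<in> lin_span S \<Longrightarrow> (\<lambda>x. a x + b x) \<in> lin_span S"
proof -
  assume "a \<in> lin_span S" "b \<in> lin_span S"
  then obtain T r T' r' where T: "finite T" "T \<subseteq> S" and a: "a = (\<lambda>x. \<Sum>b\<in>T. r b * b x)"
    and T': "finite T'" "T' \<subseteq> S" and b: "b = (\<lambda>x. \<Sum>b\<in>T'. r' b * b x)"
    unfolding lin_span_def by blast
  define r2 where "r2 c = (if c \<in> T then r c else 0) + (if c \<in> T' then r' c else 0)" for c
  have "a x + b x = (\<Sum>c\<in>T \<union> T'. r2 c * c x)" for x
  proof -
    have "r2 c * c x = (if c \<in> T then r c * c x else 0) + (if c \<in> T' then r' c * c x else 0)"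
      for c unfolding r2_def by (simp add: distrib_right)
    hence "(\<Sum>c\<in>T \<union> T'. r2 c * c x) = (\<Sum>c\<in>T \<union> T'. if c \<in> T then r c * c x else 0)
        + (\<Sum>c\<in>T \<union> T'. if c \<in> T' then r' c * c x else 0)"
      by (simp add: sum.distrib)
    also have "\<dots> = a x + b x"
      using T T' by (simp add: a b sum.If_cases Int_absorb1)
    finally show ?thesis ..
  qed
  thus ?thesis using T T' unfolding lin_span_def
    by (intro CollectI exI[of _ "T \<union> T'"] exI[of _ r2]) auto
qed

lemma lin_span_sum: "finite A \<Longrightarrow> (\<And>i. i \<in> A \<Longrightarrow> f i \<in> lin_span S) \<Longrightarrow>
    (\<lambda>x. \<Sum>i\<in>A. f i x) \<in> lin_span S"
  by (induction A rule: finite_induct) (auto simp: lin_span_zero intro: lin_span_add)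

lemma lin_span_diff: "a \<in> lin_span S \<Longrightarrow> b \<in> lin_span S \<Longrightarrow> (\<lambda>x. a x - b x) \<in> lin_span S"
  using lin_span_add[of a S "\<lambda>x. (-1) * b x"] lin_span_smult[of b S "-1"] by simp

lemma lin_span_coset_eq_iff:
  "{(\<lambda>x. f x + i x) | i. i \<in> lin_span S} = {(\<lambda>x. h x + i x) | i. i \<in> lin_span S}
    \<longleftrightarrow> (\<lambda>x. f x - h x) \<in> lin_span S" (is "?F = ?H \<longleftrightarrow> ?d \<in> _")
proof
  assume eq: "?F = ?H"
  have "f \<in> ?F" using lin_span_zero by (intro CollectI exI[of _ "\<lambda>_. 0"]) simp
  then obtain i where "i \<in> lin_span S" "f = (\<lambda>x. h x + i x)" unfolding eq by blast
  thus "?d \<in> lin_span S" by simp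
next
  assume d: "?d \<in> lin_span S"
  show "?F = ?H"
  proof (intro equalityI subsetI)
    fix y assume "y \<in> ?F"
    then obtain i where i: "i \<in> lin_span S" "y = (\<lambda>x. f x + i x)" by blast
    hence "y = (\<lambda>x. h x + (?d x + i x))" by (simp add: algebra_simps)
    thus "y \<in> ?H" using lin_span_add[OF d i(1)] by (intro CollectI exI[of _ "\<lambda>x. ?d x + i x"]) simp
  next
    fix y assume "y \<in> ?H"
    then obtain i where i: "i \<in> lin_span S" "y = (\<lambda>x. h x + i x)" by blast
    hence "y = (\<lambda>x. f x + (i x - ?d x))" by (simp add: algebra_simps)
    thus "y \<in> ?F" using lin_span_diff[OF i(1) d] by (intro CollectI exI[of _ "\<lambda>x. i x - ?d x"]) simp
  qed
qed

section \<open>Orbit sums for \<open>p\<close>-group actions\<close>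

lemma group_actionI:
  assumes H: "group H"
    and closed: "\<And>h s. h \<in> carrier H \<Longrightarrow> s \<in> S \<Longrightarrow> a h s \<in> S"
    and one: "\<And>s. s \<in> S \<Longrightarrow> a \<one>\<^bsub>H\<^esub> s = s"
    and mult: "\<And>h1 h2 s. h1 \<in> carrier H \<Longrightarrow> h2 \<in> carrier H \<Longrightarrow> s \<in> S \<Longrightarrow>
              a (h1 \<otimes>\<^bsub>H\<^esub> h2) s = a h1 (a h2 s)"
  shows "group_action H S (\<lambda>h. \<lambda>s\<in>S. a h s)"
proof -
  have bij: "(\<lambda>s\<in>S. a h s) \<in> Bij S" if h: "h \<in> carrier H" for h
  proof -
    have ih: "inv\<^bsub>H\<^esub> h \<in> carrier H" using H h by (simp add: group.inv_closed)
    have "bij_betw (\<lambda>s\<in>S. a h s) S S"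
    proof (rule bij_betw_byWitness[where f'="\<lambda>s. a (inv\<^bsub>H\<^esub> h) s"])
      show "\<forall>s\<in>S. a (inv\<^bsub>H\<^esub> h) ((\<lambda>s\<in>S. a h s) s) = s"
        using mult[OF ih h] one H h by (simp add: group.l_inv)
      show "\<forall>s\<in>S. (\<lambda>s\<in>S. a h s) (a (inv\<^bsub>H\<^esub> h) s) = s"
        using mult[OF h ih] one H h closed[OF ih] by (simp add: group.r_inv)
    qed (use closed h ih in auto)
    thus ?thesis unfolding Bij_def by simp
  qed
  have "(\<lambda>h. \<lambda>s\<in>S. a h s) \<in> hom H (BijGroup S)"
  proof (rule homI)
    show "(\<lambda>s\<in>S. a h s) \<in> carrier (BijGroup S)" if "h \<in> carrier H" for h
      using bij[OF that] by (simp add: BijGroup_def)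
    show "(\<lambda>s\<in>S. a (x \<otimes>\<^bsub>H\<^esub> y) s) = (\<lambda>s\<in>S. a x s) \<otimes>\<^bsub>BijGroup S\<^esub> (\<lambda>s\<in>S. a y s)"
      if "x \<in> carrier H" "y \<in> carrier H" for x y
      using bij[OF that(1)] bij[OF that(2)] mult[OF that] closed[OF that(2)]
      by (auto simp: BijGroup_def compose_def)
  qed
  thus ?thesis unfolding group_action_def group_hom_def group_hom_axioms_def
    using H group_BijGroup by blast
qed

lemma (in group_action) orbit_subset: "x \<in> E \<Longrightarrow> orbit G \<phi> x \<subseteq> E"
  unfolding orbit_def using element_image by blast

lemma (in group_action) orbit_eq_of_mem:
  assumes x: "x \<in> E" and y: "y \<in> orbit G \<phi> x"
  shows "orbit G \<phi> y = orbit G \<phi> x"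
proof
  have yE: "y \<in> E" using orbit_subset[OF x] y by blast
  show "orbit G \<phi> y \<subseteq> orbit G \<phi> x" using orbit_trans[OF x yE _ y] orbit_subset[OF yE] by blast
  show "orbit G \<phi> x \<subseteq> orbit G \<phi> y"
    using orbit_trans[OF yE x _ orbit_sym[OF x yE y]] orbit_subset[OF x] by blast
qed

lemma (in group_action) orbit_eq_singleton_of_fixed:
  assumes x: "x \<in> E" and y: "y \<in> orbit G \<phi> x" and fixed: "\<forall>g\<in>carrier G. \<phi> g y = y"
  shows "orbit G \<phi> x = {y}"
proof -
  interpret G: group G using group_hom group_hom.axioms(1) by auto
  obtain g where g: "g \<in> carrier G" "y = \<phi> g x" using y unfolding orbit_def by blast
  have "x = \<phi> (inv g) y" using orbit_sym_aux[OF g(1) x g(2)[symmetric]] by simp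
  hence "x = y" using fixed g(1) by simp
  thus ?thesis using fixed x orbit_refl unfolding orbit_def by auto
qed

text \<open>The length of an orbit divides the order of the \<open>p\<close>-group, so an orbit without
  fixed points contributes a multiple of \<open>p\<close>.\<close>

lemma (in group_action) sum_orbit_eq_sum_fixed_char_p:
  fixes f :: "_ \<Rightarrow> 'k::field"
  assumes card: "card (carrier G) = p ^ m" and prime: "prime p" and char: "CHAR('k) = p"
    and invariant: "\<And>g x. g \<in> carrier G \<Longrightarrow> x \<in> E \<Longrightarrow> f (\<phi> g x) = f x"
    and orb: "orb \<in> orbits G E \<phi>"
  shows "sum f orb = sum f (orb \<inter> {x\<in>E. \<forall>g\<in>carrier G. \<phi> g x = x})"
proof -
  define Fix where "Fix = {x\<in>E. \<forall>g\<in>carrier G. \<phi> g x = x}"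
  obtain x0 where x0: "x0 \<in> E" "orb = orbit G \<phi> x0"
    using orb unfolding orbits_def by blast
  have "card orb * card (stabilizer G \<phi> x0) = p ^ m"
    using orbit_stabilizer_theorem[OF x0(1)] x0(2) card by (simp add: order_def)
  hence "card orb dvd p ^ m" by (metis dvd_triv_left)
  then obtain i where i: "card orb = p ^ i" using divides_primepow_nat[OF prime] by blast
  show ?thesis
  proof (cases "orb \<inter> Fix = {}")
    case True
    have "i \<noteq> 0"
    proof
      assume "i = 0"
      then obtain z where "orb = {z}" using i card_1_singletonE by auto
      moreover have "x0 \<in> orb" using x0 orbit_refl by blast
      ultimately have "\<forall>g\<in>carrier G. \<phi> g x0 = x0"
        using x0 unfolding orbit_def by blast
      thus False using True \<open>x0 \<in> orb\<close> x0(1) unfolding Fix_def by blast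
    qed
    hence "(of_nat (card orb) :: 'k) = 0" using i char by (simp add: of_nat_eq_0_iff_char_dvd)
    moreover have "f y = f x0" if "y \<in> orb" for y
      using that x0 invariant unfolding orbit_def by auto
    ultimately show ?thesis using True unfolding Fix_def by simp
  next
    case False
    then obtain y where "y \<in> orb" "y \<in> Fix" by blast
    hence "orb = {y}" using orbit_eq_singleton_of_fixed x0 unfolding Fix_def by blast
    thus ?thesis using \<open>y \<in> Fix\<close> unfolding Fix_def by simp
  qed
qed

lemma (in group_action) sum_eq_sum_fixed_points_char_p:
  fixes f :: "_ \<Rightarrow> 'k::field"
  assumes card: "card (carrier G) = p ^ m" and prime: "prime p" and char: "CHAR('k) = p"
    and finE: "finite E" and invariant: "\<And>g x. g \<in> carrier G \<Longrightarrow> x \<in> E \<Longrightarrow> f (\<phi> g x) = f x"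
  shows "sum f E = sum f {x\<in>E. \<forall>g\<in>carrier G. \<phi> g x = x}"
proof -
  define Fix where "Fix = {x\<in>E. \<forall>g\<in>carrier G. \<phi> g x = x}"
  have "sum f E = (\<Sum>orb\<in>orbits G E \<phi>. sum f orb)" by (rule disjoint_sum[OF finE, symmetric])
  also have "\<dots> = (\<Sum>orb\<in>orbits G E \<phi>. sum f (orb \<inter> Fix))"
    unfolding Fix_def by (intro sum.cong[OF refl] sum_orbit_eq_sum_fixed_char_p[OF card prime char invariant])
  also have "\<dots> = (\<Sum>orb\<in>orbits G E \<phi>. \<Sum>x\<in>orb. if x \<in> Fix then f x else 0)"
    by (intro sum.cong[OF refl] sum.inter_restrict)
      (use finE orbits_coverture in \<open>blast intro: finite_subset\<close>)
  also have "\<dots> = sum f Fix"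
    using disjoint_sum[OF finE, of "\<lambda>x. if x \<in> Fix then f x else 0"] finE
    by (simp add: sum.If_cases Fix_def Int_def)
  finally show ?thesis unfolding Fix_def .
qed

lemma (in group_action) orbit_decomposition:
  fixes f :: "_ \<Rightarrow> 'r::comm_ring_1"
  assumes finE: "finite E" and invariant: "\<And>g x. g \<in> carrier G \<Longrightarrow> x \<in> E \<Longrightarrow> f (\<phi> g x) = f x"
    and outside: "\<And>x. x \<notin> E \<Longrightarrow> f x = 0"
  shows "f = (\<lambda>x. \<Sum>orb\<in>orbits G E \<phi>. f (SOME y. y \<in> orb) * (if x \<in> orb then 1 else 0))"
proof
  fix x
  have "f (SOME y. y \<in> orb) * (if x \<in> orb then 1 else 0) = (\<Sum>y\<in>orb. if y = x then f x else 0)"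
    if orb: "orb \<in> orbits G E \<phi>" for orb
  proof -
    obtain z where z: "z \<in> E" "orb = orbit G \<phi> z" using orb unfolding orbits_def by blast
    have "finite orb" using orbit_subset[OF z(1)] z(2) finE by (blast intro: finite_subset)
    moreover have "f (SOME y. y \<in> orb) = f x" if x: "x \<in> orb"
    proof -
      have "(SOME y. y \<in> orb) \<in> orb" using x by (rule someI)
      then obtain g where "g \<in> carrier G" "(SOME y. y \<in> orb) = \<phi> g z"
        using z(2) unfolding orbit_def by blast
      moreover obtain h where "h \<in> carrier G" "x = \<phi> h z" using x z(2) unfolding orbit_def by blast
      ultimately show ?thesis using invariant z(1) by simp
    qed
    ultimately show ?thesis by auto
  qed
  hence "(\<Sum>orb\<in>orbits G E \<phi>. f (SOME y. y \<in> orb) * (if x \<in> orb then 1 else 0))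
      = (\<Sum>orb\<in>orbits G E \<phi>. \<Sum>y\<in>orb. if y = x then f x else 0)"
    by (rule sum.cong[OF refl])
  also have "\<dots> = (\<Sum>y\<in>E. if y = x then f x else 0)" by (rule disjoint_sum[OF finE])
  also have "\<dots> = f x" using finE outside by auto
  finally show "f x = (\<Sum>orb\<in>orbits G E \<phi>. f (SOME y. y \<in> orb) * (if x \<in> orb then 1 else 0))" ..
qed


section \<open>The groups \<open>K\<close> and \<open>N\<^sub>G\<^sup>K(Q)\<close>\<close>

locale ext_brauer_setting = group G for G :: "('g, 'b) monoid_scheme" (structure) +
  fixes N Q :: "'g set" and p n :: nat and res :: "'o::comm_ring_1 \<Rightarrow> 'k::field"
  assumes finite_G: "finite (carrier G)" and normal_N: "N \<lhd> G"
    and subgroup_Q: "subgroup Q G" and card_Q: "card Q = p ^ n" and prime_p: "prime p"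
    and residue_res: "residue_map res" and char_k: "CHAR('k) = p"
begin

lemma Q_carrier: "u \<in> Q \<Longrightarrow> u \<in> carrier G"
  by (rule subgroup.mem_carrier[OF subgroup_Q])

lemma N_carrier: "m \<in> N \<Longrightarrow> m \<in> carrier G"
  by (rule subgroup.mem_carrier[OF normal_imp_subgroup[OF normal_N]])

lemma finite_Q: "finite Q"
  using finite_G subgroup.subset[OF subgroup_Q] by (rule finite_subset[rotated])

lemma Q_mult: "u \<in> Q \<Longrightarrow> v \<in> Q \<Longrightarrow> u \<otimes> v \<in> Q"
  by (rule subgroup.m_closed[OF subgroup_Q])

lemma Q_inv: "u \<in> Q \<Longrightarrow> inv u \<in> Q"
  by (rule subgroup.m_inv_closed[OF subgroup_Q])

lemma Q_one: "\<one> \<in> Q"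
  by (rule subgroup.one_closed[OF subgroup_Q])

lemma inv_mult_cancel_left [simp]: "x \<in> carrier G \<Longrightarrow> w \<in> carrier G \<Longrightarrow> inv x \<otimes> (x \<otimes> w) = w"
  by (simp add: m_assoc[symmetric])

lemma mult_inv_cancel_left [simp]: "x \<in> carrier G \<Longrightarrow> w \<in> carrier G \<Longrightarrow> x \<otimes> (inv x \<otimes> w) = w"
  by (simp add: m_assoc[symmetric])

lemma normalizer_iff: "y \<in> normalizer G Q \<longleftrightarrow> y \<in> carrier G \<and> (\<forall>u\<in>Q. y \<otimes> u \<otimes> inv y \<in> Q)
   \<and> (\<forall>u\<in>Q. inv y \<otimes> u \<otimes> y \<in> Q)"
proof -
  have conj_image: "y <# Q #> inv y = (\<lambda>u. y \<otimes> u \<otimes> inv y) ` Q" if "y \<in> carrier G" for y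
    unfolding l_coset_def r_coset_def by auto
  have "y \<in> normalizer G Q \<longleftrightarrow> y \<in> carrier G \<and> (\<lambda>u. y \<otimes> u \<otimes> inv y) ` Q = Q"
    unfolding normalizer_def stabilizer_def using Q_carrier conj_image by auto
  moreover have "(\<lambda>u. y \<otimes> u \<otimes> inv y) ` Q = Q \<longleftrightarrow>
      (\<forall>u\<in>Q. y \<otimes> u \<otimes> inv y \<in> Q) \<and> (\<forall>u\<in>Q. inv y \<otimes> u \<otimes> y \<in> Q)" if y: "y \<in> carrier G"
  proof
    assume eq: "(\<lambda>u. y \<otimes> u \<otimes> inv y) ` Q = Q"
    have "inv y \<otimes> u \<otimes> y \<in> Q" if "u \<in> Q" for u
    proof -
      obtain w where w: "w \<in> Q" "u = y \<otimes> w \<otimes> inv y" using eq \<open>u \<in> Q\<close> by blast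
      thus ?thesis using y Q_carrier[OF w(1)] by (simp add: m_assoc)
    qed
    thus "(\<forall>u\<in>Q. y \<otimes> u \<otimes> inv y \<in> Q) \<and> (\<forall>u\<in>Q. inv y \<otimes> u \<otimes> y \<in> Q)" using eq by blast
  next
    assume H: "(\<forall>u\<in>Q. y \<otimes> u \<otimes> inv y \<in> Q) \<and> (\<forall>u\<in>Q. inv y \<otimes> u \<otimes> y \<in> Q)"
    have "u \<in> (\<lambda>u. y \<otimes> u \<otimes> inv y) ` Q" if u: "u \<in> Q" for u
    proof (rule image_eqI)
      show "u = y \<otimes> (inv y \<otimes> u \<otimes> y) \<otimes> inv y" using y Q_carrier[OF u] by (simp add: m_assoc)
    qed (use H u in blast)
    thus "(\<lambda>u. y \<otimes> u \<otimes> inv y) ` Q = Q" using H by blast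
  qed
  ultimately show ?thesis by blast
qed

lemma conj_aut_apply: "u \<in> Q \<Longrightarrow> conj_aut G x Q u = x \<otimes> u \<otimes> inv x"
  by (simp add: conj_aut_def)

lemma conj_aut_extensional: "conj_aut G x Q \<in> extensional Q"
  by (simp add: conj_aut_def)

abbreviation "K \<equiv> Kgrp G N Q"

lemma K_iff: "\<phi> \<in> K \<longleftrightarrow> \<phi> \<in> extensional Q \<and> (\<forall>u\<in>Q. \<phi> u \<in> Q) \<and> inj_on \<phi> Q
   \<and> (\<forall>u\<in>Q. \<forall>v\<in>Q. \<phi> (u \<otimes> v) = \<phi> u \<otimes> \<phi> v) \<and> (\<forall>u\<in>Q. \<exists>m\<in>N. \<phi> u = u \<otimes> m)"
proof -
  have lcoset: "x \<in> u <# N \<longleftrightarrow> (\<exists>m\<in>N. x = u \<otimes> m)" for x u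
    unfolding l_coset_def by auto
  have "bij_betw \<phi> Q Q \<longleftrightarrow> (\<forall>u\<in>Q. \<phi> u \<in> Q) \<and> inj_on \<phi> Q"
    using endo_inj_surj[OF finite_Q, of \<phi>] unfolding bij_betw_def by blast
  moreover have "\<phi> \<in> K \<longleftrightarrow> (\<phi> \<in> Q \<rightarrow> Q \<and> (\<forall>u\<in>Q. \<forall>v\<in>Q. \<phi> (u \<otimes> v) = \<phi> u \<otimes> \<phi> v))
     \<and> (\<phi> \<in> extensional Q \<and> bij_betw \<phi> Q Q) \<and> (\<forall>u\<in>Q. \<phi> u \<in> u <# N)"
    unfolding Kgrp_def auto_def hom_def Bij_def by simp
  ultimately show ?thesis using lcoset unfolding Pi_def by blast
qed

lemma K_extensional: "\<phi> \<in> K \<Longrightarrow> \<phi> \<in> extensional Q"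
  using K_iff by blast

lemma K_closed: "\<phi> \<in> K \<Longrightarrow> u \<in> Q \<Longrightarrow> \<phi> u \<in> Q"
  using K_iff by blast

lemma K_carrier: "\<phi> \<in> K \<Longrightarrow> u \<in> Q \<Longrightarrow> \<phi> u \<in> carrier G"
  using K_closed Q_carrier by blast

lemma K_inj: "\<phi> \<in> K \<Longrightarrow> inj_on \<phi> Q"
  using K_iff by blast

lemma K_hom: "\<phi> \<in> K \<Longrightarrow> u \<in> Q \<Longrightarrow> v \<in> Q \<Longrightarrow> \<phi> (u \<otimes> v) = \<phi> u \<otimes> \<phi> v"
  using K_iff by blast

lemma K_image: "\<phi> \<in> K \<Longrightarrow> \<phi> ` Q = Q"
  using endo_inj_surj[OF finite_Q] K_closed K_inj by blast

lemma K_one: "\<phi> \<in> K \<Longrightarrow> \<phi> \<one> = \<one>"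
  using K_hom[OF _ Q_one Q_one] K_carrier[OF _ Q_one] by simp

lemma K_inv: "\<phi> \<in> K \<Longrightarrow> u \<in> Q \<Longrightarrow> \<phi> (inv u) = inv (\<phi> u)"
proof -
  assume k: "\<phi> \<in> K" and u: "u \<in> Q"
  have "\<phi> u \<otimes> \<phi> (inv u) = \<one>"
    using K_hom[OF k u Q_inv[OF u]] K_one[OF k] Q_carrier[OF u] by simp
  hence "\<phi> (inv u) \<otimes> \<phi> u = \<one>"
    using inv_comm K_carrier[OF k u] K_carrier[OF k Q_inv[OF u]] by blast
  thus ?thesis using inv_equality K_carrier[OF k u] K_carrier[OF k Q_inv[OF u]] by metis
qed

lemma finite_K: "finite K"
proof -
  have "K \<subseteq> Q \<rightarrow>\<^sub>E Q" unfolding PiE_iff subset_iff using K_iff by blast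
  thus ?thesis using finite_PiE[OF finite_Q finite_Q] by (rule finite_subset)
qed

lemma normalizer_if_conj_aut_K:
  assumes x: "x \<in> carrier G" and k: "conj_aut G x Q \<in> K"
  shows "x \<in> normalizer G Q"
proof -
  have "x \<otimes> u \<otimes> inv x \<in> Q" if "u \<in> Q" for u
    using K_closed[OF k that] by (simp only: conj_aut_apply[OF that])
  moreover have "inv x \<otimes> u \<otimes> x \<in> Q" if "u \<in> Q" for u
  proof -
    have "u \<in> conj_aut G x Q ` Q" using that K_image[OF k] by simp
    then obtain w where "u = conj_aut G x Q w" "w \<in> Q" by (rule imageE)
    hence w: "w \<in> Q" "u = x \<otimes> w \<otimes> inv x" using conj_aut_apply by auto
    thus ?thesis using x Q_carrier[OF w(1)] by (simp add: m_assoc)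
  qed
  ultimately show ?thesis unfolding normalizer_iff using x by blast
qed

lemma NK_iff: "x \<in> NK G N Q \<longleftrightarrow> x \<in> carrier G \<and> conj_aut G x Q \<in> K"
  unfolding NK_def normalizer_iff using normalizer_if_conj_aut_K normalizer_iff by blast

lemma NK_carrier: "x \<in> NK G N Q \<Longrightarrow> x \<in> carrier G"
  using NK_iff by blast

lemma finite_NK: "finite (NK G N Q)"
  using finite_subset[OF _ finite_G] NK_carrier by blast


lemma inv_conj: "x \<in> carrier G \<Longrightarrow> u \<in> carrier G \<Longrightarrow> inv (x \<otimes> u \<otimes> inv x) = x \<otimes> inv u \<otimes> inv x"
  by (simp add: inv_mult_group m_assoc)

lemma conj_aut_fixes: "x \<in> carrier G \<Longrightarrow> u \<in> Q \<Longrightarrow> conj_aut G x Q u \<otimes> x \<otimes> inv u = x"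
  using Q_carrier by (simp add: conj_aut_apply m_assoc)

lemma conj_aut_fixes_inv:
  assumes x: "x \<in> carrier G" and u: "u \<in> Q"
  shows "inv (conj_aut G x Q u) \<otimes> x \<otimes> u = x"
proof -
  have "inv (conj_aut G x Q u) = x \<otimes> inv u \<otimes> inv x"
    using conj_aut_apply[OF u] inv_conj[OF x Q_carrier[OF u]] by simp
  thus ?thesis using x Q_carrier[OF u] by (simp add: m_assoc)
qed

lemma conj_aut_eqI:
  assumes x: "x \<in> carrier G" and \<phi>: "\<phi> \<in> extensional Q" "\<And>u. u \<in> Q \<Longrightarrow> \<phi> u \<in> carrier G"
    and fixed: "\<And>u. u \<in> Q \<Longrightarrow> \<phi> u \<otimes> x \<otimes> inv u = x"
  shows "conj_aut G x Q = \<phi>"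
proof (rule extensionalityI[OF conj_aut_extensional \<phi>(1)])
  fix u assume u: "u \<in> Q"
  have "\<phi> u \<otimes> x \<otimes> inv u \<otimes> u \<otimes> inv x = x \<otimes> u \<otimes> inv x" using fixed[OF u] by simp
  hence "\<phi> u = x \<otimes> u \<otimes> inv x" using x \<phi>(2)[OF u] Q_carrier[OF u] by (simp add: m_assoc)
  thus "conj_aut G x Q u = \<phi> u" using conj_aut_apply[OF u] by simp
qed

lemma conj_aut_compose:
  assumes y: "y \<in> carrier G" and z: "z \<in> carrier G" and kz: "conj_aut G z Q \<in> K"
  shows "compose Q (conj_aut G y Q) (conj_aut G z Q) = conj_aut G (y \<otimes> z) Q"
proof (rule extensionalityI[where A=Q])
  show "compose Q (conj_aut G y Q) (conj_aut G z Q) \<in> extensional Q" by (simp add: compose_def)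
  show "conj_aut G (y \<otimes> z) Q \<in> extensional Q" by (rule conj_aut_extensional)
  fix u assume u: "u \<in> Q"
  have "compose Q (conj_aut G y Q) (conj_aut G z Q) u = y \<otimes> (z \<otimes> u \<otimes> inv z) \<otimes> inv y"
    using u K_closed[OF kz u] by (simp add: compose_eq conj_aut_apply)
  also have "\<dots> = conj_aut G (y \<otimes> z) Q u"
    using y z u Q_carrier[OF u] by (simp add: conj_aut_apply inv_mult_group m_assoc)
  finally show "compose Q (conj_aut G y Q) (conj_aut G z Q) u = conj_aut G (y \<otimes> z) Q u" .
qed

lemma conj_aut_quotient:
  assumes x: "x \<in> carrier G" and y: "y \<in> carrier G" and \<omega>: "\<omega> \<in> K"
    and xy: "conj_aut G x Q = compose Q (conj_aut G y Q) \<omega>"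
  shows "conj_aut G (inv y \<otimes> x) Q = \<omega>"
proof (rule extensionalityI[OF conj_aut_extensional K_extensional[OF \<omega>]])
  fix u assume u: "u \<in> Q"
  have wu: "\<omega> u \<in> Q" using K_closed[OF \<omega> u] .
  have "x \<otimes> u \<otimes> inv x = y \<otimes> \<omega> u \<otimes> inv y"
    using xy u wu by (metis compose_eq conj_aut_apply)
  hence "inv y \<otimes> (x \<otimes> u \<otimes> inv x) \<otimes> y = \<omega> u" using y Q_carrier[OF wu] by (simp add: m_assoc)
  moreover have "conj_aut G (inv y \<otimes> x) Q u = inv y \<otimes> (x \<otimes> u \<otimes> inv x) \<otimes> y"
    using u x y Q_carrier[OF u] by (simp add: conj_aut_apply inv_mult_group m_assoc)
  ultimately show "conj_aut G (inv y \<otimes> x) Q u = \<omega> u" by simp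
qed

lemma CN_rcoset_iff:
  assumes z: "z \<in> NK G N Q" and x: "x \<in> carrier G"
  shows "x \<in> CN G N Q #> z \<longleftrightarrow> x \<in> N #> z \<and> conj_aut G x Q = conj_aut G z Q"
proof -
  have zc: "z \<in> carrier G" and z1: "\<And>u. u \<in> Q \<Longrightarrow> z \<otimes> u \<otimes> inv z \<in> Q"
    and z2: "\<And>u. u \<in> Q \<Longrightarrow> inv z \<otimes> u \<otimes> z \<in> Q"
    using z NK_iff normalizer_if_conj_aut_K normalizer_iff by auto
  have "conj_aut G (m \<otimes> z) Q = conj_aut G z Q \<longleftrightarrow> (\<forall>u\<in>Q. m \<otimes> u = u \<otimes> m)"
    if m: "m \<in> carrier G" for m
  proof
    assume eq: "conj_aut G (m \<otimes> z) Q = conj_aut G z Q"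
    show "\<forall>u\<in>Q. m \<otimes> u = u \<otimes> m"
    proof
      fix u assume u: "u \<in> Q"
      have "m \<otimes> z \<otimes> (inv z \<otimes> u \<otimes> z) \<otimes> inv (m \<otimes> z) = z \<otimes> (inv z \<otimes> u \<otimes> z) \<otimes> inv z"
        using eq conj_aut_apply[OF z2[OF u]] by metis
      hence "m \<otimes> u \<otimes> inv m = u" using m zc Q_carrier[OF u] by (simp add: inv_mult_group m_assoc)
      hence "m \<otimes> u \<otimes> inv m \<otimes> m = u \<otimes> m" by simp
      thus "m \<otimes> u = u \<otimes> m" using m Q_carrier[OF u] by (simp add: m_assoc)
    qed
  next
    assume comm: "\<forall>u\<in>Q. m \<otimes> u = u \<otimes> m"
    show "conj_aut G (m \<otimes> z) Q = conj_aut G z Q"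
    proof (rule extensionalityI[OF conj_aut_extensional conj_aut_extensional])
      fix u assume u: "u \<in> Q"
      have "m \<otimes> (z \<otimes> u \<otimes> inv z) = (z \<otimes> u \<otimes> inv z) \<otimes> m" using comm z1[OF u] by blast
      hence "m \<otimes> (z \<otimes> u \<otimes> inv z) \<otimes> inv m = z \<otimes> u \<otimes> inv z"
        using m zc Q_carrier[OF u] by (simp add: m_assoc)
      thus "conj_aut G (m \<otimes> z) Q u = conj_aut G z Q u"
        using u m zc Q_carrier[OF u] by (simp add: conj_aut_apply inv_mult_group m_assoc)
    qed
  qed
  thus ?thesis unfolding r_coset_def CN_def using N_carrier by blast
qed

definition aut_conj :: "'g \<Rightarrow> ('g \<Rightarrow> 'g) \<Rightarrow> ('g \<Rightarrow> 'g)" where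
  "aut_conj y \<chi> = (\<lambda>u\<in>Q. y \<otimes> \<chi> (inv y \<otimes> u \<otimes> y) \<otimes> inv y)"

lemma phi_conj_inv_eq_aut_conj: "y \<in> carrier G \<Longrightarrow> phi_conj G Q (inv y) \<chi> = aut_conj y \<chi>"
  unfolding phi_conj_def aut_conj_def by simp

lemma aut_conj_apply: "u \<in> Q \<Longrightarrow> aut_conj y \<chi> u = y \<otimes> \<chi> (inv y \<otimes> u \<otimes> y) \<otimes> inv y"
  unfolding aut_conj_def by simp

lemma aut_conj_K:
  assumes y: "y \<in> normalizer G Q" and k: "\<chi> \<in> K"
  shows "aut_conj y \<chi> \<in> K"
proof -
  have yc: "y \<in> carrier G" and y1: "\<And>u. u \<in> Q \<Longrightarrow> y \<otimes> u \<otimes> inv y \<in> Q"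
    and y2: "\<And>u. u \<in> Q \<Longrightarrow> inv y \<otimes> u \<otimes> y \<in> Q" using y normalizer_iff by auto
  have inj: "inj_on (aut_conj y \<chi>) Q"
  proof (rule inj_onI)
    fix a b assume a: "a \<in> Q" and b: "b \<in> Q" and e: "aut_conj y \<chi> a = aut_conj y \<chi> b"
    hence "\<chi> (inv y \<otimes> a \<otimes> y) = \<chi> (inv y \<otimes> b \<otimes> y)"
      using yc K_carrier[OF k] y2 by (simp add: aut_conj_apply m_assoc)
    hence "inv y \<otimes> a \<otimes> y = inv y \<otimes> b \<otimes> y" using K_inj[OF k] y2 a b by (simp add: inj_on_eq_iff)
    thus "a = b" using yc Q_carrier a b by (simp add: m_assoc)
  qed
  have hom: "aut_conj y \<chi> (u \<otimes> v) = aut_conj y \<chi> u \<otimes> aut_conj y \<chi> v" if u: "u \<in> Q" and v: "v \<in> Q" for u v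
  proof -
    have "inv y \<otimes> (u \<otimes> v) \<otimes> y = (inv y \<otimes> u \<otimes> y) \<otimes> (inv y \<otimes> v \<otimes> y)"
      using yc Q_carrier u v by (simp add: m_assoc)
    thus ?thesis using u v Q_mult yc K_carrier[OF k] y2 K_hom[OF k] by (simp add: aut_conj_apply m_assoc)
  qed
  have coset: "\<exists>m\<in>N. aut_conj y \<chi> u = u \<otimes> m" if u: "u \<in> Q" for u
  proof -
    obtain m where m: "m \<in> N" "\<chi> (inv y \<otimes> u \<otimes> y) = (inv y \<otimes> u \<otimes> y) \<otimes> m"
      using k y2[OF u] K_iff by blast
    have "aut_conj y \<chi> u = u \<otimes> (y \<otimes> m \<otimes> inv y)"
      using u m yc Q_carrier[OF u] N_carrier[OF m(1)] by (simp add: aut_conj_apply m_assoc)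
    thus ?thesis using normal.inv_op_closed2[OF normal_N yc m(1)] by blast
  qed
  show ?thesis unfolding K_iff using inj hom coset y1 y2 K_closed[OF k]
    by (auto simp: aut_conj_apply aut_conj_def)
qed

lemma aut_conj_conj_aut:
  assumes y: "y \<in> normalizer G Q" and x: "x \<in> carrier G"
  shows "aut_conj y (conj_aut G x Q) = conj_aut G (y \<otimes> x \<otimes> inv y) Q"
proof (rule extensionalityI[where A=Q])
  show "aut_conj y (conj_aut G x Q) \<in> extensional Q" unfolding aut_conj_def by simp
  show "conj_aut G (y \<otimes> x \<otimes> inv y) Q \<in> extensional Q" by (rule conj_aut_extensional)
  fix u assume u: "u \<in> Q"
  have yc: "y \<in> carrier G" and y2: "inv y \<otimes> u \<otimes> y \<in> Q" using y u normalizer_iff by auto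
  show "aut_conj y (conj_aut G x Q) u = conj_aut G (y \<otimes> x \<otimes> inv y) Q u"
    using u y2 yc x Q_carrier[OF u] by (simp add: aut_conj_apply conj_aut_apply inv_mult_group m_assoc)
qed

lemma NK_conj_closed:
  assumes y: "y \<in> normalizer G Q" and x: "x \<in> NK G N Q"
  shows "y \<otimes> x \<otimes> inv y \<in> NK G N Q"
proof -
  have yc: "y \<in> carrier G" using y normalizer_iff by auto
  have xc: "x \<in> carrier G" and k: "conj_aut G x Q \<in> K" using x NK_iff by auto
  have "conj_aut G (y \<otimes> x \<otimes> inv y) Q \<in> K" using aut_conj_K[OF y k] aut_conj_conj_aut[OF y xc] by simp
  thus ?thesis using NK_iff yc xc by simp
qed


section \<open>Twisted diagonal subgroups and the Brauer kernel\<close>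

definition bimul :: "'g \<times> 'g \<Rightarrow> 'g \<Rightarrow> 'g" where
  "bimul t x = fst t \<otimes> x \<otimes> inv (snd t)"

lemma group_GG: "group (G \<times>\<times> G)"
  by (rule DirProd_group[OF is_group is_group])

lemma Delta_eq_image: "Delta \<phi> Q = (\<lambda>u. (\<phi> u, u)) ` Q"
  unfolding Delta_def by auto

lemma card_Delta: "card (Delta \<phi> Q) = card Q"
  unfolding Delta_eq_image by (rule card_image) (rule inj_onI, simp)

lemma finite_Delta: "finite (Delta \<phi> Q)"
  unfolding Delta_eq_image using finite_Q by simp

lemma subgroup_Delta: assumes k: "\<phi> \<in> K" shows "subgroup (Delta \<phi> Q) (G \<times>\<times> G)"
proof (rule group.subgroupI[OF group_GG])
  show "Delta \<phi> Q \<subseteq> carrier (G \<times>\<times> G)" unfolding Delta_def using K_carrier[OF k] Q_carrier by auto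
  show "Delta \<phi> Q \<noteq> {}" unfolding Delta_def using Q_one by auto
  fix a assume "a \<in> Delta \<phi> Q"
  then obtain u where u: "u \<in> Q" "a = (\<phi> u, u)" unfolding Delta_def by auto
  have "inv\<^bsub>G \<times>\<times> G\<^esub> a = (\<phi> (inv u), inv u)"
    using u K_carrier[OF k u(1)] Q_carrier[OF u(1)] K_inv[OF k u(1)]
    by (simp add: inv_DirProd[OF is_group is_group])
  thus "inv\<^bsub>G \<times>\<times> G\<^esub> a \<in> Delta \<phi> Q" unfolding Delta_def using Q_inv[OF u(1)] by auto
next
  fix a b assume "a \<in> Delta \<phi> Q" "b \<in> Delta \<phi> Q"
  then obtain u v where u: "u \<in> Q" "a = (\<phi> u, u)" and v: "v \<in> Q" "b = (\<phi> v, v)"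
    unfolding Delta_def by auto
  have "a \<otimes>\<^bsub>G \<times>\<times> G\<^esub> b = (\<phi> (u \<otimes> v), u \<otimes> v)" using u v K_hom[OF k u(1) v(1)] by simp
  thus "a \<otimes>\<^bsub>G \<times>\<times> G\<^esub> b \<in> Delta \<phi> Q" unfolding Delta_def using Q_mult[OF u(1) v(1)] by auto
qed

lemma biact_apply: "g \<in> carrier G \<Longrightarrow> biact G (v, u) a g = a (inv v \<otimes> g \<otimes> u)"
  by (simp add: biact_def)

lemma bimul_mult:
  "s \<in> carrier (G \<times>\<times> G) \<Longrightarrow> t \<in> carrier (G \<times>\<times> G) \<Longrightarrow> x \<in> carrier G \<Longrightarrow>
   bimul (s \<otimes>\<^bsub>G \<times>\<times> G\<^esub> t) x = bimul s (bimul t x)"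
  unfolding bimul_def by (auto simp: inv_mult_group m_assoc)

lemma bimul_inv:
  "t \<in> carrier (G \<times>\<times> G) \<Longrightarrow> x \<in> carrier G \<Longrightarrow> bimul (inv\<^bsub>G \<times>\<times> G\<^esub> t) (bimul t x) = x"
  unfolding bimul_def by (auto simp: inv_DirProd[OF is_group is_group] m_assoc)

lemma biact_gdelta:
  assumes x: "x \<in> carrier G" and t: "t \<in> carrier (G \<times>\<times> G)"
  shows "biact G t (gdelta x) = gdelta (bimul t x)"
proof
  fix g
  obtain v u where vu: "t = (v, u)" "v \<in> carrier G" "u \<in> carrier G" using t by (cases t) auto
  have "inv v \<otimes> g \<otimes> u = x \<longleftrightarrow> g = v \<otimes> x \<otimes> inv u" if g: "g \<in> carrier G"
  proof
    assume "inv v \<otimes> g \<otimes> u = x"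
    moreover have "g = v \<otimes> (inv v \<otimes> g \<otimes> u) \<otimes> inv u" using g vu by (simp add: m_assoc)
    ultimately show "g = v \<otimes> x \<otimes> inv u" by simp
  qed (use vu x in \<open>simp add: m_assoc\<close>)
  thus "biact G t (gdelta x) g = gdelta (bimul t x) g"
    using vu x by (cases "g \<in> carrier G") (auto simp: biact_def gdelta_def bimul_def)
qed

lemma gdelta_fixpts:
  assumes x: "x \<in> carrier G" and R: "R \<subseteq> carrier (G \<times>\<times> G)"
    and fixed: "\<And>t. t \<in> R \<Longrightarrow> bimul t x = x"
  shows "gdelta x \<in> fixpts G R"
  unfolding fixpts_def
proof (intro CollectI conjI ballI)
  show "gdelta x \<in> OG G" using x unfolding OG_def gdelta_def by auto
  fix t assume t: "t \<in> R"
  hence "t \<in> carrier (G \<times>\<times> G)" using R by blast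
  thus "biact G t (gdelta x) = gdelta x" using biact_gdelta[OF x] fixed[OF t] by metis
qed

lemma fixpts_Delta_iff: "a \<in> fixpts G (Delta \<phi> Q) \<longleftrightarrow>
    a \<in> OG G \<and> (\<forall>u\<in>Q. \<forall>g\<in>carrier G. a (inv (\<phi> u) \<otimes> g \<otimes> u) = a g)"
proof -
  have "biact G (\<phi> u, u) a = a \<longleftrightarrow> (\<forall>g\<in>carrier G. a (inv (\<phi> u) \<otimes> g \<otimes> u) = a g)"
    if "a \<in> OG G" for u
    using that unfolding biact_def OG_def fun_eq_iff by auto
  thus ?thesis unfolding fixpts_def Delta_def by blast
qed

lemma fixpts_Delta_conj:
  assumes a: "a \<in> fixpts G (Delta \<phi> Q)" and k: "\<phi> \<in> K" and u: "u \<in> Q" and g: "g \<in> carrier G"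
  shows "a (\<phi> u \<otimes> g \<otimes> inv u) = a g"
  using a Q_inv[OF u] g K_inv[OF k u] K_carrier[OF k u] unfolding fixpts_Delta_iff by force

lemma fixpts_Delta_zero: "(\<lambda>_. 0) \<in> fixpts G (Delta \<phi> Q)"
  unfolding fixpts_Delta_iff OG_def by simp

lemma fixpts_Delta_add:
  "a \<in> fixpts G (Delta \<phi> Q) \<Longrightarrow> b \<in> fixpts G (Delta \<phi> Q) \<Longrightarrow> (\<lambda>g. a g + b g) \<in> fixpts G (Delta \<phi> Q)"
  unfolding fixpts_Delta_iff OG_def by auto

lemma fixpts_Delta_diff:
  "a \<in> fixpts G (Delta \<phi> Q) \<Longrightarrow> b \<in> fixpts G (Delta \<phi> Q) \<Longrightarrow> (\<lambda>g. a g - b g) \<in> fixpts G (Delta \<phi> Q)"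
  unfolding fixpts_Delta_iff OG_def by auto

lemma fixpts_Delta_smult: "a \<in> fixpts G (Delta \<phi> Q) \<Longrightarrow> (\<lambda>g. c * a g) \<in> fixpts G (Delta \<phi> Q)"
  unfolding fixpts_Delta_iff OG_def by auto


abbreviation Delta_lcosets :: "('g \<Rightarrow> 'g) \<Rightarrow> ('g \<times> 'g) set \<Rightarrow> ('g \<times> 'g) set set" where
  "Delta_lcosets \<phi> R \<equiv> {t <#\<^bsub>G \<times>\<times> G\<^esub> R | t. t \<in> Delta \<phi> Q}"

lemma Delta_lcoset_some:
  assumes k: "\<phi> \<in> K" and R: "subgroup R (G \<times>\<times> G)" "R \<subseteq> Delta \<phi> Q"
    and C: "C \<in> Delta_lcosets \<phi> R"
  shows "(SOME t. t \<in> C) \<in> Delta \<phi> Q" "C = (SOME t. t \<in> C) <#\<^bsub>G \<times>\<times> G\<^esub> R"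
proof -
  interpret GG: group "G \<times>\<times> G" by (rule group_GG)
  obtain t0 where t0: "t0 \<in> Delta \<phi> Q" "C = t0 <#\<^bsub>G \<times>\<times> G\<^esub> R" using C by blast
  have t0c: "t0 \<in> carrier (G \<times>\<times> G)" using t0(1) subgroup.mem_carrier[OF subgroup_Delta[OF k]] by blast
  have "t0 \<in> C" using GG.lcos_self[OF t0c R(1)] t0 by simp
  hence some: "(SOME t. t \<in> C) \<in> C" by (rule someI)
  then obtain r where r: "r \<in> R" "(SOME t. t \<in> C) = t0 \<otimes>\<^bsub>G \<times>\<times> G\<^esub> r"
    using t0(2) unfolding l_coset_def by blast
  show "(SOME t. t \<in> C) \<in> Delta \<phi> Q"
    using r subgroup.m_closed[OF subgroup_Delta[OF k] t0(1)] R(2) by (metis subsetD)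
  show "C = (SOME t. t \<in> C) <#\<^bsub>G \<times>\<times> G\<^esub> R"
    using GG.l_repr_independence[OF _ t0c R(1)] some t0(2) by simp
qed

lemma prime_dvd_card_Delta_lcosets:
  assumes k: "\<phi> \<in> K" and R: "subgroup R (G \<times>\<times> G)" "R \<subset> Delta \<phi> Q"
  shows "p dvd card (Delta_lcosets \<phi> R)"
proof -
  interpret GG: group "G \<times>\<times> G" by (rule group_GG)
  define D where "D = (G \<times>\<times> G)\<lparr>carrier := Delta \<phi> Q\<rparr>"
  have DS: "subgroup (Delta \<phi> Q) (G \<times>\<times> G)" by (rule subgroup_Delta[OF k])
  have D: "group D" unfolding D_def by (rule subgroup.subgroup_is_group[OF DS GG.is_group])
  have RD: "subgroup R D" unfolding D_def using GG.subgroup_incl[OF R(1) DS] R(2) by auto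
  have fD: "finite (carrier D)" unfolding D_def using finite_Delta by simp
  have lc: "lcosets\<^bsub>D\<^esub> R = Delta_lcosets \<phi> R" unfolding LCOSETS_def D_def by auto
  have index: "card (Delta_lcosets \<phi> R) * card R = p ^ n"
    using group.l_lagrange[OF D fD RD] lc card_Delta card_Q unfolding order_def D_def by simp
  hence "card (Delta_lcosets \<phi> R) dvd p ^ n" by (intro dvdI[where k="card R"]) simp
  then obtain i where i: "card (Delta_lcosets \<phi> R) = p ^ i"
    using divides_primepow_nat[OF prime_p] by blast
  have "i \<noteq> 0"
  proof
    assume "i = 0"
    hence "card R = card (Delta \<phi> Q)" using index i card_Delta card_Q by simp
    hence "R = Delta \<phi> Q" using R(2) finite_Delta card_subset_eq[of "Delta \<phi> Q" R] by auto
    thus False using R(2) by simp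
  qed
  thus ?thesis using i by simp
qed

lemma trace_apply_fixed:
  assumes k: "\<phi> \<in> K" and R: "subgroup R (G \<times>\<times> G)" "R \<subseteq> Delta \<phi> Q"
    and x: "x \<in> carrier G" "conj_aut G x Q = \<phi>"
  shows "trace G (Delta \<phi> Q) R c x = of_nat (card (Delta_lcosets \<phi> R)) * c x"
proof -
  have "biact G (SOME t. t \<in> C) c x = c x" if C: "C \<in> Delta_lcosets \<phi> R" for C
  proof -
    obtain u where u: "u \<in> Q" "(SOME t. t \<in> C) = (\<phi> u, u)"
      using Delta_lcoset_some(1)[OF k R C] unfolding Delta_def by blast
    show ?thesis using u biact_apply[OF x(1), of "\<phi> u" u c] conj_aut_fixes_inv[OF x(1) u(1)] x(2) by simp
  qed
  thus ?thesis unfolding trace_def by simp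
qed

lemma brauer_ker_vanishes_at_fixed:
  assumes k: "\<phi> \<in> K" and b: "b \<in> brauer_ker G Q \<phi>"
    and x: "x \<in> carrier G" "conj_aut G x Q = \<phi>"
  shows "res (b x) = 0"
proof -
  define Gens :: "('g \<Rightarrow> 'o) set" where
    "Gens = (\<Union>R\<in>{R. subgroup R (G \<times>\<times> G) \<and> R \<subset> Delta \<phi> Q}. trace G (Delta \<phi> Q) R ` fixpts G R)
      \<union> {(\<lambda>g. j * a g) | j a. j \<in> jac_rad \<and> a \<in> fixpts G (Delta \<phi> Q)}"
  obtain T and r :: "('g \<Rightarrow> 'o) \<Rightarrow> 'o" where T: "finite T" "T \<subseteq> Gens"
    and b_eq: "b = (\<lambda>x. \<Sum>a\<in>T. r a * a x)"
    using b unfolding brauer_ker_def lin_span_def Gens_def by blast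
  have "res (a x) = 0" if a: "a \<in> Gens" for a
  proof (cases "\<exists>j a'. j \<in> jac_rad \<and> a = (\<lambda>g. j * a' g)")
    case True
    then obtain j a' where "res j = 0" "a = (\<lambda>g. j * a' g)"
      using residue_map_eq_0_iff[OF residue_res] by blast
    thus ?thesis by (simp add: residue_map_mult[OF residue_res])
  next
    case False
    then obtain R c where R: "subgroup R (G \<times>\<times> G)" "R \<subset> Delta \<phi> Q"
      and a_eq: "a = trace G (Delta \<phi> Q) R c"
      using a unfolding Gens_def by blast
    have "(of_nat (card (Delta_lcosets \<phi> R)) :: 'k) = 0"
      using prime_dvd_card_Delta_lcosets[OF k R] char_k by (simp add: of_nat_eq_0_iff_char_dvd)
    moreover have "a x = of_nat (card (Delta_lcosets \<phi> R)) * c x"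
      using trace_apply_fixed[OF k R(1) _ x] R(2) a_eq by blast
    ultimately show ?thesis
      by (simp add: residue_map_mult[OF residue_res] residue_map_of_nat[OF residue_res])
  qed
  thus ?thesis using T unfolding b_eq
    by (simp add: residue_map_sum[OF residue_res] residue_map_mult[OF residue_res] subset_iff)
qed


lemma Delta_carrier: "\<phi> \<in> K \<Longrightarrow> t \<in> Delta \<phi> Q \<Longrightarrow> t \<in> carrier (G \<times>\<times> G)"
  using subgroup.mem_carrier[OF subgroup_Delta] by blast

lemma fixpts_Delta_bimul:
  assumes a: "a \<in> fixpts G (Delta \<phi> Q)" and k: "\<phi> \<in> K" and t: "t \<in> Delta \<phi> Q" and g: "g \<in> carrier G"
  shows "a (bimul t g) = a g"
  using t fixpts_Delta_conj[OF a k _ g] unfolding Delta_def bimul_def by auto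

definition stab_Delta :: "('g \<Rightarrow> 'g) \<Rightarrow> 'g \<Rightarrow> ('g \<times> 'g) set" where
  "stab_Delta \<phi> x = {t \<in> Delta \<phi> Q. bimul t x = x}"

lemma subgroup_stab_Delta:
  assumes k: "\<phi> \<in> K" and x: "x \<in> carrier G"
  shows "subgroup (stab_Delta \<phi> x) (G \<times>\<times> G)"
proof (rule group.subgroupI[OF group_GG])
  show "stab_Delta \<phi> x \<subseteq> carrier (G \<times>\<times> G)" unfolding stab_Delta_def using Delta_carrier[OF k] by blast
  have "\<one>\<^bsub>G \<times>\<times> G\<^esub> \<in> stab_Delta \<phi> x"
    using subgroup.one_closed[OF subgroup_Delta[OF k]] x unfolding stab_Delta_def bimul_def by simp
  thus "stab_Delta \<phi> x \<noteq> {}" by blast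
next
  fix t assume "t \<in> stab_Delta \<phi> x"
  hence t: "t \<in> Delta \<phi> Q" "bimul t x = x" unfolding stab_Delta_def by auto
  thus "inv\<^bsub>G \<times>\<times> G\<^esub> t \<in> stab_Delta \<phi> x"
    using subgroup.m_inv_closed[OF subgroup_Delta[OF k] t(1)] bimul_inv[OF Delta_carrier[OF k t(1)] x]
    unfolding stab_Delta_def by simp
next
  fix s t assume "s \<in> stab_Delta \<phi> x" "t \<in> stab_Delta \<phi> x"
  hence s: "s \<in> Delta \<phi> Q" "bimul s x = x" and t: "t \<in> Delta \<phi> Q" "bimul t x = x"
    unfolding stab_Delta_def by auto
  thus "s \<otimes>\<^bsub>G \<times>\<times> G\<^esub> t \<in> stab_Delta \<phi> x"
    using subgroup.m_closed[OF subgroup_Delta[OF k] s(1) t(1)]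
      bimul_mult[OF Delta_carrier[OF k s(1)] Delta_carrier[OF k t(1)] x]
    unfolding stab_Delta_def by simp
qed

lemma stab_Delta_lcoset_eq_iff:
  assumes k: "\<phi> \<in> K" and x: "x \<in> carrier G" and s: "s \<in> Delta \<phi> Q" and t: "t \<in> Delta \<phi> Q"
  shows "s <#\<^bsub>G \<times>\<times> G\<^esub> stab_Delta \<phi> x = t <#\<^bsub>G \<times>\<times> G\<^esub> stab_Delta \<phi> x \<longleftrightarrow> bimul s x = bimul t x"
proof -
  interpret GG: group "G \<times>\<times> G" by (rule group_GG)
  have S: "subgroup (stab_Delta \<phi> x) (G \<times>\<times> G)" by (rule subgroup_stab_Delta[OF k x])
  have sc: "s \<in> carrier (G \<times>\<times> G)" and tc: "t \<in> carrier (G \<times>\<times> G)"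
    using Delta_carrier[OF k] s t by auto
  show ?thesis
  proof
    assume "s <#\<^bsub>G \<times>\<times> G\<^esub> stab_Delta \<phi> x = t <#\<^bsub>G \<times>\<times> G\<^esub> stab_Delta \<phi> x"
    hence "t \<in> s <#\<^bsub>G \<times>\<times> G\<^esub> stab_Delta \<phi> x" using GG.lcos_self[OF tc S] by simp
    then obtain r where r: "r \<in> stab_Delta \<phi> x" "t = s \<otimes>\<^bsub>G \<times>\<times> G\<^esub> r" unfolding l_coset_def by blast
    have "r \<in> carrier (G \<times>\<times> G)" using r(1) subgroup.mem_carrier[OF S] by blast
    thus "bimul s x = bimul t x" using r bimul_mult[OF sc _ x] unfolding stab_Delta_def by simp
  next
    assume e: "bimul s x = bimul t x"
    have isc: "inv\<^bsub>G \<times>\<times> G\<^esub> s \<in> carrier (G \<times>\<times> G)" using GG.inv_closed[OF sc] .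
    have "inv\<^bsub>G \<times>\<times> G\<^esub> s \<otimes>\<^bsub>G \<times>\<times> G\<^esub> t \<in> Delta \<phi> Q"
      using subgroup.m_closed[OF subgroup_Delta[OF k] subgroup.m_inv_closed[OF subgroup_Delta[OF k] s] t] .
    moreover have "bimul (inv\<^bsub>G \<times>\<times> G\<^esub> s \<otimes>\<^bsub>G \<times>\<times> G\<^esub> t) x = x"
      using bimul_mult[OF isc tc x] bimul_inv[OF sc x] e by simp
    ultimately have "inv\<^bsub>G \<times>\<times> G\<^esub> s \<otimes>\<^bsub>G \<times>\<times> G\<^esub> t \<in> stab_Delta \<phi> x" unfolding stab_Delta_def by blast
    hence "t \<in> s <#\<^bsub>G \<times>\<times> G\<^esub> stab_Delta \<phi> x" using subgroup.lcos_module_rev[OF S GG.is_group] sc tc by simp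
    thus "s <#\<^bsub>G \<times>\<times> G\<^esub> stab_Delta \<phi> x = t <#\<^bsub>G \<times>\<times> G\<^esub> stab_Delta \<phi> x"
      using GG.l_repr_independence[OF _ sc S] by simp
  qed
qed

lemma bij_betw_Delta_lcosets_orbit:
  assumes k: "\<phi> \<in> K" and x: "x \<in> carrier G"
  shows "bij_betw (\<lambda>C. bimul (SOME t. t \<in> C) x) (Delta_lcosets \<phi> (stab_Delta \<phi> x))
    ((\<lambda>t. bimul t x) ` Delta \<phi> Q)"
proof -
  let ?S = "stab_Delta \<phi> x"
  have S: "subgroup ?S (G \<times>\<times> G)" "?S \<subseteq> Delta \<phi> Q"
    using subgroup_stab_Delta[OF k x] unfolding stab_Delta_def by auto
  note some = Delta_lcoset_some[OF k S]
  have inj: "inj_on (\<lambda>C. bimul (SOME t. t \<in> C) x) (Delta_lcosets \<phi> ?S)"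
  proof (rule inj_onI)
    fix C1 C2 assume C: "C1 \<in> Delta_lcosets \<phi> ?S" "C2 \<in> Delta_lcosets \<phi> ?S"
      and "bimul (SOME t. t \<in> C1) x = bimul (SOME t. t \<in> C2) x"
    thus "C1 = C2" using stab_Delta_lcoset_eq_iff[OF k x some(1)[OF C(1)] some(1)[OF C(2)]]
      some(2)[OF C(1)] some(2)[OF C(2)] by simp
  qed
  have "(\<lambda>t. bimul t x) ` Delta \<phi> Q \<subseteq> (\<lambda>C. bimul (SOME t. t \<in> C) x) ` Delta_lcosets \<phi> ?S"
  proof
    fix y assume "y \<in> (\<lambda>t. bimul t x) ` Delta \<phi> Q"
    then obtain t where t: "t \<in> Delta \<phi> Q" "y = bimul t x" by blast
    define C where "C = t <#\<^bsub>G \<times>\<times> G\<^esub> ?S"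
    have C: "C \<in> Delta_lcosets \<phi> ?S" unfolding C_def using t(1) by blast
    have "bimul (SOME t. t \<in> C) x = y"
      using stab_Delta_lcoset_eq_iff[OF k x some(1)[OF C] t(1)] some(2)[OF C] t(2) C_def by simp
    thus "y \<in> (\<lambda>C. bimul (SOME t. t \<in> C) x) ` Delta_lcosets \<phi> ?S" using C by blast
  qed
  moreover have "(\<lambda>C. bimul (SOME t. t \<in> C) x) ` Delta_lcosets \<phi> ?S \<subseteq> (\<lambda>t. bimul t x) ` Delta \<phi> Q"
    using some(1) by blast
  ultimately show ?thesis using inj unfolding bij_betw_def by blast
qed

lemma trace_gdelta_stab_Delta:
  assumes k: "\<phi> \<in> K" and x: "x \<in> carrier G"
  shows "trace G (Delta \<phi> Q) (stab_Delta \<phi> x) (gdelta x) g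
       = (if g \<in> (\<lambda>t. bimul t x) ` Delta \<phi> Q then 1 else 0)"
proof -
  let ?S = "stab_Delta \<phi> x"
  have S: "subgroup ?S (G \<times>\<times> G)" "?S \<subseteq> Delta \<phi> Q"
    using subgroup_stab_Delta[OF k x] unfolding stab_Delta_def by auto
  have "trace G (Delta \<phi> Q) ?S (gdelta x) g
      = (\<Sum>C\<in>Delta_lcosets \<phi> ?S. (\<lambda>y. if g = y then 1 else 0) (bimul (SOME t. t \<in> C) x))"
    unfolding trace_def
  proof (rule sum.cong[OF refl])
    fix C assume "C \<in> Delta_lcosets \<phi> ?S"
    hence "biact G (SOME t. t \<in> C) (gdelta x) = gdelta (bimul (SOME t. t \<in> C) x)"
      by (rule biact_gdelta[OF x Delta_carrier[OF k Delta_lcoset_some(1)[OF k S]]])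
    thus "biact G (SOME t. t \<in> C) (gdelta x) g = (\<lambda>y. if g = y then 1 else 0) (bimul (SOME t. t \<in> C) x)"
      unfolding gdelta_def by (rule fun_cong)
  qed
  also have "\<dots> = (\<Sum>y\<in>(\<lambda>t. bimul t x) ` Delta \<phi> Q. if g = y then 1 else 0)"
    by (rule sum.reindex_bij_betw[OF bij_betw_Delta_lcosets_orbit[OF k x]])
  also have "\<dots> = (if g \<in> (\<lambda>t. bimul t x) ` Delta \<phi> Q then 1 else 0)"
    using finite_Delta by simp
  finally show ?thesis .
qed

definition twisted_act :: "('g \<Rightarrow> 'g) \<Rightarrow> 'g \<Rightarrow> 'g \<Rightarrow> 'g" where
  "twisted_act \<phi> = (\<lambda>u. \<lambda>y\<in>carrier G. bimul (\<phi> u, u) y)"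

lemma group_action_twisted_act:
  assumes k: "\<phi> \<in> K" shows "group_action (G\<lparr>carrier := Q\<rparr>) (carrier G) (twisted_act \<phi>)"
  unfolding twisted_act_def
proof (rule group_actionI[OF subgroup.subgroup_is_group[OF subgroup_Q is_group]])
  show "bimul (\<phi> h, h) s \<in> carrier G" if "h \<in> carrier (G\<lparr>carrier := Q\<rparr>)" "s \<in> carrier G" for h s
    using that K_carrier[OF k] Q_carrier by (simp add: bimul_def)
  show "bimul (\<phi> \<one>\<^bsub>G\<lparr>carrier := Q\<rparr>\<^esub>, \<one>\<^bsub>G\<lparr>carrier := Q\<rparr>\<^esub>) s = s" if "s \<in> carrier G" for s
    using that K_one[OF k] by (simp add: bimul_def)
  show "bimul (\<phi> (h1 \<otimes>\<^bsub>G\<lparr>carrier := Q\<rparr>\<^esub> h2), h1 \<otimes>\<^bsub>G\<lparr>carrier := Q\<rparr>\<^esub> h2) s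
      = bimul (\<phi> h1, h1) (bimul (\<phi> h2, h2) s)"
    if "h1 \<in> carrier (G\<lparr>carrier := Q\<rparr>)" "h2 \<in> carrier (G\<lparr>carrier := Q\<rparr>)" "s \<in> carrier G" for h1 h2 s
    using that K_hom[OF k] K_carrier[OF k] Q_carrier by (simp add: bimul_def inv_mult_group m_assoc)
qed

lemma orbit_twisted_act:
  "x \<in> carrier G \<Longrightarrow> orbit (G\<lparr>carrier := Q\<rparr>) (twisted_act \<phi>) x = (\<lambda>t. bimul t x) ` Delta \<phi> Q"
  unfolding orbit_def twisted_act_def Delta_def by auto

lemma twisted_act_fixed_iff:
  assumes k: "\<phi> \<in> K" and x: "x \<in> carrier G"
  shows "(\<forall>u\<in>Q. bimul (\<phi> u, u) x = x) \<longleftrightarrow> conj_aut G x Q = \<phi>"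
  using conj_aut_eqI[OF x K_extensional[OF k] K_carrier[OF k]] conj_aut_fixes[OF x]
  unfolding bimul_def by auto


lemma Delta_orbit_indicator_in_brauer_ker:
  assumes k: "\<phi> \<in> K" and x: "x \<in> carrier G" and not_fixed: "conj_aut G x Q \<noteq> \<phi>"
  shows "(\<lambda>g. if g \<in> (\<lambda>t. bimul t x) ` Delta \<phi> Q then 1 else 0 :: 'o) \<in> brauer_ker G Q \<phi>"
proof -
  let ?S = "stab_Delta \<phi> x"
  obtain u where u: "u \<in> Q" "bimul (\<phi> u, u) x \<noteq> x"
    using twisted_act_fixed_iff[OF k x] not_fixed by blast
  have "(\<phi> u, u) \<in> Delta \<phi> Q - ?S" using u unfolding Delta_def stab_Delta_def by auto
  hence proper: "?S \<subset> Delta \<phi> Q" unfolding stab_Delta_def by blast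
  have S: "subgroup ?S (G \<times>\<times> G)" by (rule subgroup_stab_Delta[OF k x])
  have "(gdelta x :: 'g \<Rightarrow> 'o) \<in> fixpts G ?S"
    by (rule gdelta_fixpts[OF x subgroup.subset[OF S]]) (simp add: stab_Delta_def)
  hence "trace G (Delta \<phi> Q) ?S (gdelta x :: 'g \<Rightarrow> 'o) \<in>
      (\<Union>R\<in>{R. subgroup R (G \<times>\<times> G) \<and> R \<subset> Delta \<phi> Q}. trace G (Delta \<phi> Q) R ` fixpts G R)"
    using S proper by (intro UN_I[of ?S]) auto
  hence "trace G (Delta \<phi> Q) ?S (gdelta x :: 'g \<Rightarrow> 'o) \<in> brauer_ker G Q \<phi>"
    unfolding brauer_ker_def by (intro lin_span_mem UnI1)
  moreover have "trace G (Delta \<phi> Q) ?S (gdelta x :: 'g \<Rightarrow> 'o) = (\<lambda>g. if g \<in> (\<lambda>t. bimul t x) ` Delta \<phi> Q then 1 else 0)"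
    by (rule ext) (rule trace_gdelta_stab_Delta[OF k x])
  ultimately show ?thesis by simp
qed

lemma gdelta_fixpts_conj_aut:
  assumes x: "x \<in> carrier G"
  shows "gdelta x \<in> fixpts G (Delta (conj_aut G x Q) Q)"
proof (rule gdelta_fixpts[OF x])
  show "Delta (conj_aut G x Q) Q \<subseteq> carrier (G \<times>\<times> G)"
    unfolding Delta_def using x Q_carrier by (auto simp: conj_aut_apply)
qed (auto simp: Delta_def bimul_def conj_aut_fixes[OF x])

lemma gdelta_smult_in_brauer_ker:
  assumes x: "x \<in> carrier G" and j: "(j :: 'o) \<in> jac_rad"
  shows "(\<lambda>g. j * gdelta x g) \<in> brauer_ker G Q (conj_aut G x Q)"
proof -
  have "(gdelta x :: 'g \<Rightarrow> 'o) \<in> fixpts G (Delta (conj_aut G x Q) Q)"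
    by (rule gdelta_fixpts_conj_aut[OF x])
  thus ?thesis unfolding brauer_ker_def using j by (intro lin_span_mem UnI2) blast
qed

lemma twisted_act_orbit_some:
  assumes k: "\<phi> \<in> K" and orb: "orb \<in> orbits (G\<lparr>carrier := Q\<rparr>) (carrier G) (twisted_act \<phi>)"
  shows "(SOME x. x \<in> orb) \<in> carrier G" "orb = (\<lambda>t. bimul t (SOME x. x \<in> orb)) ` Delta \<phi> Q"
proof -
  interpret twisted: group_action "G\<lparr>carrier := Q\<rparr>" "carrier G" "twisted_act \<phi>"
    by (rule group_action_twisted_act[OF k])
  obtain z where z: "z \<in> carrier G" "orb = orbit (G\<lparr>carrier := Q\<rparr>) (twisted_act \<phi>) z"
    using orb unfolding orbits_def by blast
  have "z \<in> orb" using twisted.orbit_refl[OF z(1)] z(2) by simp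
  hence rep: "(SOME x. x \<in> orb) \<in> orb" by (rule someI)
  show rc: "(SOME x. x \<in> orb) \<in> carrier G" using rep twisted.orbit_subset[OF z(1)] z(2) by blast
  have "orbit (G\<lparr>carrier := Q\<rparr>) (twisted_act \<phi>) (SOME x. x \<in> orb) = orb"
    using twisted.orbit_eq_of_mem[OF z(1)] z(2) rep by simp
  thus "orb = (\<lambda>t. bimul t (SOME x. x \<in> orb)) ` Delta \<phi> Q" using orbit_twisted_act[OF rc] by simp
qed

lemma twisted_act_orbit_indicator_in_brauer_ker:
  assumes k: "\<phi> \<in> K" and orb: "orb \<in> orbits (G\<lparr>carrier := Q\<rparr>) (carrier G) (twisted_act \<phi>)"
    and c: "conj_aut G (SOME x. x \<in> orb) Q = \<phi> \<Longrightarrow> (c :: 'o) \<in> jac_rad"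
  shows "(\<lambda>g. c * (if g \<in> orb then 1 else 0)) \<in> brauer_ker G Q \<phi>"
proof -
  define x0 where "x0 = (SOME x. x \<in> orb)"
  have x0: "x0 \<in> carrier G" "orb = (\<lambda>t. bimul t x0) ` Delta \<phi> Q"
    using twisted_act_orbit_some[OF k orb] unfolding x0_def by auto
  show ?thesis
  proof (cases "conj_aut G x0 Q = \<phi>")
    case True
    have fixed: "\<forall>u\<in>Q. bimul (\<phi> u, u) x0 = x0" using twisted_act_fixed_iff[OF k x0(1)] True by blast
    have "(\<lambda>t. bimul t x0) ` Delta \<phi> Q = {x0}"
    proof
      show "(\<lambda>t. bimul t x0) ` Delta \<phi> Q \<subseteq> {x0}" using fixed unfolding Delta_def by auto
      show "{x0} \<subseteq> (\<lambda>t. bimul t x0) ` Delta \<phi> Q"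
        using fixed Q_one unfolding Delta_def by (auto intro!: image_eqI[of _ _ "(\<phi> \<one>, \<one>)"])
    qed
    hence "(\<lambda>g. c * (if g \<in> orb then 1 else 0)) = (\<lambda>g. c * gdelta x0 g)"
      unfolding gdelta_def using x0(2) by auto
    thus ?thesis using gdelta_smult_in_brauer_ker[OF x0(1) c[folded x0_def, OF True]] True by simp
  next
    case False
    have "(\<lambda>g. if g \<in> orb then 1 else 0 :: 'o) \<in> brauer_ker G Q \<phi>"
      using Delta_orbit_indicator_in_brauer_ker[OF k x0(1) False] by (simp only: x0(2)[symmetric])
    thus ?thesis unfolding brauer_ker_def by (rule lin_span_smult)
  qed
qed

lemma brauer_ker_if_vanishes_at_fixed:
  assumes k: "\<phi> \<in> K" and a: "a \<in> fixpts G (Delta \<phi> Q)"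
    and vanish: "\<And>x. x \<in> carrier G \<Longrightarrow> conj_aut G x Q = \<phi> \<Longrightarrow> res (a x) = 0"
  shows "a \<in> brauer_ker G Q \<phi>"
proof -
  interpret twisted: group_action "G\<lparr>carrier := Q\<rparr>" "carrier G" "twisted_act \<phi>"
    by (rule group_action_twisted_act[OF k])
  define Os where "Os = orbits (G\<lparr>carrier := Q\<rparr>) (carrier G) (twisted_act \<phi>)"
  have a_eq: "a = (\<lambda>x. \<Sum>orb\<in>Os. a (SOME y. y \<in> orb) * (if x \<in> orb then 1 else 0))"
    unfolding Os_def
  proof (rule twisted.orbit_decomposition[OF finite_G])
    show "a (twisted_act \<phi> u x) = a x" if "u \<in> carrier (G\<lparr>carrier := Q\<rparr>)" "x \<in> carrier G" for u x
      using that fixpts_Delta_bimul[OF a k, of "(\<phi> u, u)" x] unfolding twisted_act_def Delta_def by auto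
    show "a x = 0" if "x \<notin> carrier G" for x using that a unfolding fixpts_def OG_def by blast
  qed
  have "Os \<subseteq> Pow (carrier G)" unfolding Os_def using twisted.orbits_coverture by blast
  hence "finite Os" using finite_G by (simp add: finite_subset)
  moreover have "(\<lambda>g. a (SOME y. y \<in> orb) * (if g \<in> orb then 1 else 0)) \<in> brauer_ker G Q \<phi>"
    if orb: "orb \<in> Os" for orb
  proof (rule twisted_act_orbit_indicator_in_brauer_ker[OF k orb[unfolded Os_def]])
    assume "conj_aut G (SOME x. x \<in> orb) Q = \<phi>"
    thus "a (SOME x. x \<in> orb) \<in> jac_rad"
      using vanish[OF twisted_act_orbit_some(1)[OF k orb[unfolded Os_def]]]
        residue_map_eq_0_iff[OF residue_res] by blast
  qed
  ultimately show ?thesis unfolding brauer_ker_def by (subst a_eq) (rule lin_span_sum)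
qed

lemma brauer_ker_iff:
  assumes k: "\<phi> \<in> K" and a: "a \<in> fixpts G (Delta \<phi> Q)"
  shows "a \<in> brauer_ker G Q \<phi> \<longleftrightarrow> (\<forall>x\<in>carrier G. conj_aut G x Q = \<phi> \<longrightarrow> res (a x) = 0)"
  using brauer_ker_vanishes_at_fixed[OF k] brauer_ker_if_vanishes_at_fixed[OF k a] by blast


section \<open>The isomorphism \<open>\<psi>\<^sup>K\<close>\<close>

lemma br_cls_eq_iff_diff_in_ker: "br_cls G N Q F = br_cls G N Q F' \<longleftrightarrow>
   (\<forall>\<phi>\<in>K. (\<lambda>g. F \<phi> g - F' \<phi> g) \<in> brauer_ker G Q \<phi>)"
proof -
  have "br_cls G N Q F \<phi> = br_cls G N Q F' \<phi> \<longleftrightarrow> (\<lambda>g. F \<phi> g - F' \<phi> g) \<in> brauer_ker G Q \<phi>"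
    if "\<phi> \<in> K" for \<phi>
    using that lin_span_coset_eq_iff[of "F \<phi>" _ "F' \<phi>"] unfolding br_cls_def brauer_ker_def by simp
  moreover have "br_cls G N Q F \<phi> = br_cls G N Q F' \<phi>" if "\<phi> \<notin> K" for \<phi>
    using that unfolding br_cls_def by simp
  ultimately show ?thesis unfolding fun_eq_iff by blast
qed

definition lift_fam :: "('g \<Rightarrow> 'k) \<Rightarrow> ('g \<Rightarrow> 'g) \<Rightarrow> 'g \<Rightarrow> 'o" where
  "lift_fam f = (\<lambda>\<phi> g. if g \<in> carrier G \<and> conj_aut G g Q = \<phi> then res_lift res (f g) else 0)"

definition coeffs :: "(('g \<Rightarrow> 'g) \<Rightarrow> 'g \<Rightarrow> 'o) \<Rightarrow> 'g \<Rightarrow> 'k" where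
  "coeffs F = (\<lambda>x. if x \<in> NK G N Q then res (F (conj_aut G x Q) x) else 0)"

text \<open>\<open>psi\<close> is the paper's \<open>\<psi>\<^sup>K\<close>, sending \<open>x\<close> to \<open>Br\<^bsub>\<Delta>\<^sub>\<phi>\<^sub>x(Q)\<^esub>(x)\<close>; \<open>coeffs\<close> reads
  off the reduced coefficient of each \<open>x\<close> in the summand \<open>\<phi>\<^sub>x\<close> and inverts it on classes.\<close>

definition psi :: "('g \<Rightarrow> 'k) \<Rightarrow> ('g \<Rightarrow> 'g) \<Rightarrow> ('g \<Rightarrow> 'o) set" where
  "psi f = br_cls G N Q (lift_fam f)"

lemma br_cls_eq_iff:
  assumes F: "F \<in> br_fam G N Q" and F': "F' \<in> br_fam G N Q"
  shows "br_cls G N Q F = br_cls G N Q F' \<longleftrightarrow> coeffs F = coeffs F'"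
proof -
  have "(\<lambda>g. F \<phi> g - F' \<phi> g) \<in> brauer_ker G Q \<phi> \<longleftrightarrow>
     (\<forall>x\<in>carrier G. conj_aut G x Q = \<phi> \<longrightarrow> res (F \<phi> x) = res (F' \<phi> x))" if k: "\<phi> \<in> K" for \<phi>
  proof -
    have "(\<lambda>g. F \<phi> g - F' \<phi> g) \<in> fixpts G (Delta \<phi> Q)"
      using F F' k unfolding br_fam_def by (auto intro: fixpts_Delta_diff)
    thus ?thesis by (simp add: brauer_ker_iff[OF k] residue_map_diff[OF residue_res])
  qed
  moreover have "coeffs F = coeffs F' \<longleftrightarrow>
      (\<forall>x\<in>NK G N Q. res (F (conj_aut G x Q) x) = res (F' (conj_aut G x Q) x))"
    unfolding coeffs_def fun_eq_iff by auto
  ultimately show ?thesis unfolding br_cls_eq_iff_diff_in_ker using NK_iff by auto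
qed

lemma lift_fam_in_br_fam: "lift_fam f \<in> br_fam G N Q"
  unfolding br_fam_def
proof (intro CollectI ballI)
  fix \<phi> assume k: "\<phi> \<in> K"
  have "lift_fam f \<phi> (inv (\<phi> u) \<otimes> g \<otimes> u) = lift_fam f \<phi> g" if u: "u \<in> Q" and g: "g \<in> carrier G" for u g
  proof (cases "conj_aut G g Q = \<phi> \<or> conj_aut G (inv (\<phi> u) \<otimes> g \<otimes> u) Q = \<phi>")
    case True
    \<comment> \<open>\<open>\<Delta>\<^sub>\<phi>(Q)\<close> fixes the points of the fibre of \<open>\<phi>\<close> and maps the fibre to itself\<close>
    have "inv (\<phi> u) \<otimes> g \<otimes> u = g"
    proof (cases "conj_aut G g Q = \<phi>")
      case True thus ?thesis using conj_aut_fixes_inv[OF g u] by simp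
    next
      case False
      define h where "h = inv (\<phi> u) \<otimes> g \<otimes> u"
      have hc: "h \<in> carrier G" unfolding h_def using K_carrier[OF k u] g Q_carrier[OF u] by simp
      have "conj_aut G h Q = \<phi>" using True False h_def by simp
      hence "\<phi> u \<otimes> h \<otimes> inv u = h" using conj_aut_fixes[OF hc u] by simp
      moreover have "\<phi> u \<otimes> h \<otimes> inv u = g"
        unfolding h_def using K_carrier[OF k u] g Q_carrier[OF u] by (simp add: m_assoc)
      ultimately show ?thesis unfolding h_def by simp
    qed
    thus ?thesis by simp
  next
    case False thus ?thesis unfolding lift_fam_def by auto
  qed
  thus "lift_fam f \<phi> \<in> fixpts G (Delta \<phi> Q)" unfolding fixpts_Delta_iff OG_def lift_fam_def by auto
qed

lemma coeffs_lift_fam: "f \<in> kNK G N Q \<Longrightarrow> coeffs (lift_fam f) = f"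
  unfolding coeffs_def lift_fam_def kNK_def
  using NK_carrier residue_map_res_lift[OF residue_res] by auto

lemma coeffs_in_kNK: "coeffs F \<in> kNK G N Q"
  unfolding coeffs_def kNK_def by simp

lemma br_cls_eq_psi_coeffs: "F \<in> br_fam G N Q \<Longrightarrow> br_cls G N Q F = psi (coeffs F)"
  unfolding psi_def using br_cls_eq_iff lift_fam_in_br_fam coeffs_lift_fam[OF coeffs_in_kNK] by metis

lemma coeffs_eq_if_psi_eq:
  "f \<in> kNK G N Q \<Longrightarrow> F \<in> br_fam G N Q \<Longrightarrow> psi f = br_cls G N Q F \<Longrightarrow> f = coeffs F"
  unfolding psi_def using br_cls_eq_iff[OF lift_fam_in_br_fam] coeffs_lift_fam by metis

lemma bij_betw_psi: "bij_betw psi (kNK G N Q) (ext_brauer G N Q)"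
proof (rule bij_betw_imageI)
  show "inj_on psi (kNK G N Q)"
  proof (rule inj_onI)
    fix f h assume f: "f \<in> kNK G N Q" and h: "h \<in> kNK G N Q" and e: "psi f = psi h"
    have "f = coeffs (lift_fam h)"
      using coeffs_eq_if_psi_eq[OF f lift_fam_in_br_fam] e unfolding psi_def by simp
    thus "f = h" using coeffs_lift_fam[OF h] by simp
  qed
  show "psi ` kNK G N Q = ext_brauer G N Q"
  proof
    show "psi ` kNK G N Q \<subseteq> ext_brauer G N Q"
      unfolding ext_brauer_def psi_def using lift_fam_in_br_fam by blast
    show "ext_brauer G N Q \<subseteq> psi ` kNK G N Q"
    proof
      fix X :: "('g \<Rightarrow> 'g) \<Rightarrow> ('g \<Rightarrow> 'o) set" assume "X \<in> ext_brauer G N Q"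
      then obtain F where "F \<in> br_fam G N Q" "X = br_cls G N Q F" unfolding ext_brauer_def by blast
      thus "X \<in> psi ` kNK G N Q" using br_cls_eq_psi_coeffs coeffs_in_kNK by blast
    qed
  qed
qed

lemma br_fam_add: "F \<in> br_fam G N Q \<Longrightarrow> H \<in> br_fam G N Q \<Longrightarrow> (\<lambda>\<phi> g. F \<phi> g + H \<phi> g) \<in> br_fam G N Q"
  unfolding br_fam_def by (auto intro: fixpts_Delta_add)

lemma br_fam_smult: "F \<in> br_fam G N Q \<Longrightarrow> (\<lambda>\<phi> g. c * F \<phi> g) \<in> br_fam G N Q"
  unfolding br_fam_def by (auto intro: fixpts_Delta_smult)

lemma psi_add: assumes f: "f \<in> kNK G N Q" and h: "h \<in> kNK G N Q" and F: "F \<in> br_fam G N Q"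
  and H: "H \<in> br_fam G N Q" and e1: "psi f = br_cls G N Q F" and e2: "psi h = br_cls G N Q H"
  shows "psi (\<lambda>x. f x + h x) = br_cls G N Q (\<lambda>\<phi> g. F \<phi> g + H \<phi> g)"
proof -
  have "(\<lambda>x. f x + h x) = coeffs (\<lambda>\<phi> g. F \<phi> g + H \<phi> g)"
    using coeffs_eq_if_psi_eq[OF f F e1] coeffs_eq_if_psi_eq[OF h H e2] unfolding coeffs_def
    by (auto simp: residue_map_add[OF residue_res])
  thus ?thesis using br_cls_eq_psi_coeffs[OF br_fam_add[OF F H]] by simp
qed

lemma psi_smult: assumes f: "f \<in> kNK G N Q" and F: "F \<in> br_fam G N Q" and e1: "psi f = br_cls G N Q F"
  shows "psi (\<lambda>x. res c * f x) = br_cls G N Q (\<lambda>\<phi> g. c * F \<phi> g)"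
proof -
  have "(\<lambda>x. res c * f x) = coeffs (\<lambda>\<phi> g. c * F \<phi> g)"
    using coeffs_eq_if_psi_eq[OF f F e1] unfolding coeffs_def
    by (auto simp: residue_map_mult[OF residue_res])
  thus ?thesis using br_cls_eq_psi_coeffs[OF br_fam_smult[OF F]] by simp
qed

lemma psi_gdelta:
  assumes x: "x \<in> NK G N Q"
  shows "psi (gdelta x) = br_cls G N Q (\<lambda>\<phi>. if \<phi> = conj_aut G x Q then gdelta x else (\<lambda>_. 0))"
proof -
  let ?D = "\<lambda>\<phi>. if \<phi> = conj_aut G x Q then gdelta x else (\<lambda>_. 0 :: 'o)"
  have "?D \<in> br_fam G N Q" unfolding br_fam_def
    using gdelta_fixpts_conj_aut[OF NK_carrier[OF x]] fixpts_Delta_zero by auto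
  moreover have "coeffs ?D = gdelta x" unfolding coeffs_def gdelta_def fun_eq_iff
    using x residue_map_one[OF residue_res] residue_map_zero[OF residue_res] by auto
  ultimately show ?thesis using br_cls_eq_psi_coeffs by metis
qed

lemma fam_act_in_br_fam: assumes y: "y \<in> normalizer G Q" and F: "F \<in> br_fam G N Q"
  shows "fam_act G Q y F \<in> br_fam G N Q"
  unfolding br_fam_def
proof (intro CollectI ballI)
  fix \<chi> assume k: "\<chi> \<in> K"
  have yc: "y \<in> carrier G" and y1: "\<And>u. u \<in> Q \<Longrightarrow> y \<otimes> u \<otimes> inv y \<in> Q"
    using y normalizer_iff by auto
  have k': "aut_conj y \<chi> \<in> K" by (rule aut_conj_K[OF y k])
  have Ff: "F (aut_conj y \<chi>) \<in> fixpts G (Delta (aut_conj y \<chi>) Q)" using F k' unfolding br_fam_def by blast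
  have fa: "fam_act G Q y F \<chi> = (\<lambda>g. if g \<in> carrier G then F (aut_conj y \<chi>) (y \<otimes> g \<otimes> inv y) else 0)"
    unfolding fam_act_def phi_conj_inv_eq_aut_conj[OF yc] by simp
  show "fam_act G Q y F \<chi> \<in> fixpts G (Delta \<chi> Q)" unfolding fixpts_Delta_iff fa
  proof (intro conjI ballI)
    show "(\<lambda>g. if g \<in> carrier G then F (aut_conj y \<chi>) (y \<otimes> g \<otimes> inv y) else 0) \<in> OG G" unfolding OG_def by simp
    fix u g assume u: "u \<in> Q" and g: "g \<in> carrier G"
    define w where "w = y \<otimes> u \<otimes> inv y"
    have wQ: "w \<in> Q" unfolding w_def using y1[OF u] .
    have cw: "aut_conj y \<chi> w = y \<otimes> \<chi> u \<otimes> inv y"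
      unfolding aut_conj_def w_def using wQ[unfolded w_def] yc Q_carrier[OF u] by (simp add: m_assoc)
    have uc: "u \<in> carrier G" "\<chi> u \<in> carrier G" using Q_carrier[OF u] K_carrier[OF k u] by auto
    have icw: "inv (aut_conj y \<chi> w) = y \<otimes> inv (\<chi> u) \<otimes> inv y" using cw inv_conj[OF yc uc(2)] by simp
    have "y \<otimes> (inv (\<chi> u) \<otimes> g \<otimes> u) \<otimes> inv y
        = (y \<otimes> inv (\<chi> u) \<otimes> inv y) \<otimes> (y \<otimes> g \<otimes> inv y) \<otimes> (y \<otimes> u \<otimes> inv y)"
      using yc uc g by (simp add: m_assoc)
    also have "\<dots> = inv (aut_conj y \<chi> w) \<otimes> (y \<otimes> g \<otimes> inv y) \<otimes> w" using icw w_def by simp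
    finally have eq: "y \<otimes> (inv (\<chi> u) \<otimes> g \<otimes> u) \<otimes> inv y = inv (aut_conj y \<chi> w) \<otimes> (y \<otimes> g \<otimes> inv y) \<otimes> w" .
    have "F (aut_conj y \<chi>) (inv (aut_conj y \<chi> w) \<otimes> (y \<otimes> g \<otimes> inv y) \<otimes> w) = F (aut_conj y \<chi>) (y \<otimes> g \<otimes> inv y)"
      using Ff wQ yc g unfolding fixpts_Delta_iff by simp
    thus "(if inv (\<chi> u) \<otimes> g \<otimes> u \<in> carrier G then F (aut_conj y \<chi>) (y \<otimes> (inv (\<chi> u) \<otimes> g \<otimes> u) \<otimes> inv y) else 0) =
       (if g \<in> carrier G then F (aut_conj y \<chi>) (y \<otimes> g \<otimes> inv y) else 0)"
      using eq g uc by simp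
  qed
qed

lemma psi_kact: assumes y: "y \<in> normalizer G Q" and f: "f \<in> kNK G N Q" and F: "F \<in> br_fam G N Q"
  and e: "psi f = br_cls G N Q F"
  shows "psi (kact G N Q y f) = br_cls G N Q (fam_act G Q y F)"
proof -
  have yc: "y \<in> carrier G" using y normalizer_iff by auto
  have fc: "f = coeffs F" by (rule coeffs_eq_if_psi_eq[OF f F e])
  have "kact G N Q y f = coeffs (fam_act G Q y F)"
  proof
    fix x show "kact G N Q y f x = coeffs (fam_act G Q y F) x"
    proof (cases "x \<in> NK G N Q")
      case False thus ?thesis unfolding kact_def coeffs_def by simp
    next
      case True
      have xc: "x \<in> carrier G" using NK_carrier[OF True] .
      have x': "y \<otimes> x \<otimes> inv y \<in> NK G N Q" using NK_conj_closed[OF y True] .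
      have "fam_act G Q y F (conj_aut G x Q) x = F (conj_aut G (y \<otimes> x \<otimes> inv y) Q) (y \<otimes> x \<otimes> inv y)"
        unfolding fam_act_def using xc phi_conj_inv_eq_aut_conj[OF yc] aut_conj_conj_aut[OF y xc] by simp
      thus ?thesis unfolding kact_def coeffs_def fc using True x' by simp
    qed
  qed
  thus ?thesis using br_cls_eq_psi_coeffs[OF fam_act_in_br_fam[OF y F]] by simp
qed

lemma lift_fam_nonzero:
  "lift_fam f \<phi> g \<noteq> 0 \<Longrightarrow> g \<in> carrier G \<and> conj_aut G g Q = \<phi> \<and> f g \<noteq> 0"
  unfolding lift_fam_def by (auto split: if_splits)

lemma psi_kNK_comp_subset:
  assumes z: "z \<in> NK G N Q"
  shows "psi ` kNK_comp G N Q z \<subseteq> ext_brauer_comp G N Q z"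
proof
  fix X assume "X \<in> psi ` kNK_comp G N Q z"
  then obtain f where f: "f \<in> kNK_comp G N Q z" "X = psi f" by blast
  have supp: "conj_aut G g Q = conj_aut G z Q \<and> g \<in> N #> z" if "lift_fam f \<phi> g \<noteq> 0" for \<phi> g
  proof -
    have g: "g \<in> carrier G" "f g \<noteq> 0" using lift_fam_nonzero[OF that] by auto
    hence "g \<in> CN G N Q #> z" using f(1) unfolding kNK_comp_def by blast
    thus ?thesis using CN_rcoset_iff[OF z g(1)] by simp
  qed
  have "\<forall>\<phi>. \<phi> \<noteq> conj_aut G z Q \<longrightarrow> lift_fam f \<phi> = (\<lambda>_. 0)"
    using supp lift_fam_nonzero by (metis (full_types))
  moreover have "\<forall>g. g \<notin> N #> z \<longrightarrow> lift_fam f (conj_aut G z Q) g = 0" using supp by blast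
  ultimately show "X \<in> ext_brauer_comp G N Q z" unfolding ext_brauer_comp_def f(2) psi_def
    using lift_fam_in_br_fam by blast
qed

lemma ext_brauer_comp_subset_psi_image:
  assumes z: "z \<in> NK G N Q"
  shows "ext_brauer_comp G N Q z \<subseteq> psi ` kNK_comp G N Q z"
proof
  fix X :: "('g \<Rightarrow> 'g) \<Rightarrow> ('g \<Rightarrow> 'o) set" assume "X \<in> ext_brauer_comp G N Q z"
  then obtain F :: "('g \<Rightarrow> 'g) \<Rightarrow> 'g \<Rightarrow> 'o" where F: "F \<in> br_fam G N Q" "X = br_cls G N Q F"
    "\<forall>\<phi>. \<phi> \<noteq> conj_aut G z Q \<longrightarrow> F \<phi> = (\<lambda>_. 0)"
    "\<forall>g. g \<notin> N #> z \<longrightarrow> F (conj_aut G z Q) g = 0"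
    unfolding ext_brauer_comp_def by blast
  have "F (conj_aut G x Q) x = 0" if x: "x \<in> NK G N Q" "x \<notin> CN G N Q #> z" for x
    using F(3,4) CN_rcoset_iff[OF z NK_carrier[OF x(1)]] x(2) by metis
  hence "coeffs F \<in> kNK_comp G N Q z"
    unfolding kNK_comp_def coeffs_def kNK_def using residue_map_zero[OF residue_res] by auto
  thus "X \<in> psi ` kNK_comp G N Q z" using br_cls_eq_psi_coeffs[OF F(1)] F(2) by blast
qed


lemma psi_image_kNK_comp: "z \<in> NK G N Q \<Longrightarrow> psi ` kNK_comp G N Q z = ext_brauer_comp G N Q z"
  using psi_kNK_comp_subset ext_brauer_comp_subset_psi_image by blast

section \<open>Multiplicativity\<close>

abbreviation Pairs :: "('g \<Rightarrow> 'g) \<Rightarrow> (('g \<Rightarrow> 'g) \<times> ('g \<Rightarrow> 'g)) set" where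
  "Pairs \<phi> \<equiv> {(\<chi>, \<omega>). \<chi> \<in> K \<and> \<omega> \<in> K \<and> compose Q \<chi> \<omega> = \<phi>}"

lemma finite_Pairs: "finite (Pairs \<phi>)"
  using finite_subset[of "Pairs \<phi>" "K \<times> K"] finite_K by auto

lemma fam_mult_eq: "fam_mult G N Q F H \<phi> x = (\<Sum>pr\<in>Pairs \<phi>. gconv G (F (fst pr)) (H (snd pr)) x)"
  unfolding fam_mult_def by (simp add: split_def)

lemma bij_betw_two_sided_mult:
  assumes a: "a \<in> carrier G" and b: "b \<in> carrier G"
  shows "bij_betw (\<lambda>y. a \<otimes> y \<otimes> b) (carrier G) (carrier G)"
  by (rule bij_betw_byWitness[where f'="\<lambda>y. inv a \<otimes> y \<otimes> inv b"]) (use a b in \<open>auto simp: m_assoc\<close>)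

lemma gconv_fixpts_Delta_compose:
  assumes kc: "\<chi> \<in> K" and kw: "\<omega> \<in> K" and cp: "compose Q \<chi> \<omega> = \<phi>"
  and a: "a \<in> fixpts G (Delta \<chi> Q)" and c: "c \<in> fixpts G (Delta \<omega> Q)"
  and u: "u \<in> Q" and g: "g \<in> carrier G"
  shows "gconv G a c (inv (\<phi> u) \<otimes> g \<otimes> u) = gconv G a c g"
proof -
  define v where "v = \<omega> u"
  have vQ: "v \<in> Q" unfolding v_def using K_closed[OF kw u] .
  have pu: "\<phi> u = \<chi> v" unfolding v_def using cp[symmetric] compose_eq[OF u] by simp
  have vc: "v \<in> carrier G" "\<chi> v \<in> carrier G" using Q_carrier[OF vQ] K_carrier[OF kc vQ] by auto
  have uc: "u \<in> carrier G" using Q_carrier[OF u] .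
  have hc: "inv (\<phi> u) \<otimes> g \<otimes> u \<in> carrier G" using pu vc uc g by simp
  have "(\<Sum>y\<in>carrier G. a y * c (inv y \<otimes> (inv (\<phi> u) \<otimes> g \<otimes> u)))
      = (\<Sum>y\<in>carrier G. a (inv (\<chi> v) \<otimes> y \<otimes> v) * c (inv (inv (\<chi> v) \<otimes> y \<otimes> v) \<otimes> (inv (\<phi> u) \<otimes> g \<otimes> u)))"
    by (rule sum.reindex_bij_betw[OF bij_betw_two_sided_mult[OF inv_closed[OF vc(2)] vc(1)], symmetric])
  also have "\<dots> = (\<Sum>y\<in>carrier G. a y * c (inv y \<otimes> g))"
  proof (rule sum.cong[OF refl])
    fix y assume y: "y \<in> carrier G"
    have e1: "a (inv (\<chi> v) \<otimes> y \<otimes> v) = a y" using a vQ y unfolding fixpts_Delta_iff by blast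
    have "inv (inv (\<chi> v) \<otimes> y \<otimes> v) \<otimes> (inv (\<phi> u) \<otimes> g \<otimes> u) = inv (\<omega> u) \<otimes> (inv y \<otimes> g) \<otimes> u"
      using pu vc uc y g unfolding v_def[symmetric] by (simp add: inv_mult_group m_assoc)
    hence e2: "c (inv (inv (\<chi> v) \<otimes> y \<otimes> v) \<otimes> (inv (\<phi> u) \<otimes> g \<otimes> u)) = c (inv y \<otimes> g)"
      using c u y g unfolding fixpts_Delta_iff by simp
    show "a (inv (\<chi> v) \<otimes> y \<otimes> v) * c (inv (inv (\<chi> v) \<otimes> y \<otimes> v) \<otimes> (inv (\<phi> u) \<otimes> g \<otimes> u))
        = a y * c (inv y \<otimes> g)" using e1 e2 by simp
  qed
  finally show ?thesis unfolding gconv_def using hc g by simp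
qed

lemma fam_mult_in_br_fam:
  assumes F: "F \<in> br_fam G N Q" and H: "H \<in> br_fam G N Q"
  shows "fam_mult G N Q F H \<in> br_fam G N Q"
  unfolding br_fam_def
proof (intro CollectI ballI)
  fix \<phi> assume k: "\<phi> \<in> K"
  show "fam_mult G N Q F H \<phi> \<in> fixpts G (Delta \<phi> Q)" unfolding fixpts_Delta_iff
  proof (intro conjI ballI)
    show "fam_mult G N Q F H \<phi> \<in> OG G" unfolding OG_def fam_mult_eq gconv_def by simp
    fix u g assume u: "u \<in> Q" and g: "g \<in> carrier G"
    show "fam_mult G N Q F H \<phi> (inv (\<phi> u) \<otimes> g \<otimes> u) = fam_mult G N Q F H \<phi> g"
      unfolding fam_mult_eq
    proof (rule sum.cong[OF refl])
      fix pr assume pr: "pr \<in> Pairs \<phi>"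
      have P: "fst pr \<in> K" "snd pr \<in> K" "compose Q (fst pr) (snd pr) = \<phi>" using pr by auto
      show "gconv G (F (fst pr)) (H (snd pr)) (inv (\<phi> u) \<otimes> g \<otimes> u) = gconv G (F (fst pr)) (H (snd pr)) g"
        using gconv_fixpts_Delta_compose[OF P _ _ u g] F H P unfolding br_fam_def by blast
    qed
  qed
qed

text \<open>Reduced modulo \<open>p\<close>, the convolution of a \<open>\<Delta>\<^sub>\<chi>(Q)\<close>-fixed and a \<open>\<Delta>\<^sub>\<omega>(Q)\<close>-fixed element
  only sees the fixed points of the twisted action of \<open>Q\<close> on the summation variable.\<close>

lemma residue_conv_sum_eq_fibre_sum:
  assumes kc: "\<chi> \<in> K" and kw: "\<omega> \<in> K" and x: "x \<in> carrier G"
    and cp: "compose Q \<chi> \<omega> = conj_aut G x Q"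
    and a: "a \<in> fixpts G (Delta \<chi> Q)" and c: "c \<in> fixpts G (Delta \<omega> Q)"
  shows "(\<Sum>y\<in>carrier G. res (a y) * res (c (inv y \<otimes> x)))
       = (\<Sum>y\<in>{y\<in>carrier G. conj_aut G y Q = \<chi>}. res (a y) * res (c (inv y \<otimes> x)))"
proof -
  interpret twisted: group_action "G\<lparr>carrier := Q\<rparr>" "carrier G" "twisted_act \<chi>"
    by (rule group_action_twisted_act[OF kc])
  have act: "twisted_act \<chi> v y = \<chi> v \<otimes> y \<otimes> inv v" if "y \<in> carrier G" for v y
    using that unfolding twisted_act_def bimul_def by simp
  have invariant: "res (a (twisted_act \<chi> v y)) * res (c (inv (twisted_act \<chi> v y) \<otimes> x))
      = res (a y) * res (c (inv y \<otimes> x))"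
    if v: "v \<in> carrier (G\<lparr>carrier := Q\<rparr>)" and y: "y \<in> carrier G" for v y
  proof -
    have vQ: "v \<in> Q" using v by simp
    obtain u where u: "u \<in> Q" "v = \<omega> u" using K_image[OF kw] vQ by blast
    have "\<chi> v = conj_aut G x Q u" using cp u compose_eq[OF u(1)] by metis
    hence "inv (\<chi> v) \<otimes> x = x \<otimes> inv u"
      using conj_aut_fixes_inv[OF x u(1)] K_carrier[OF kc vQ] x Q_carrier[OF u(1)]
      by (metis inv_closed m_assoc m_closed r_inv r_one)
    hence "inv (twisted_act \<chi> v y) \<otimes> x = \<omega> u \<otimes> (inv y \<otimes> x) \<otimes> inv u"
      using act[OF y] u(2) K_carrier[OF kc vQ] Q_carrier[OF vQ] Q_carrier[OF u(1)] y x
      by (simp add: inv_mult_group m_assoc)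
    hence "c (inv (twisted_act \<chi> v y) \<otimes> x) = c (inv y \<otimes> x)"
      using fixpts_Delta_conj[OF c kw u(1)] y x by simp
    moreover have "a (twisted_act \<chi> v y) = a y" using act[OF y] fixpts_Delta_conj[OF a kc vQ y] by simp
    ultimately show ?thesis by simp
  qed
  have fixed: "{y\<in>carrier G. \<forall>v\<in>carrier (G\<lparr>carrier := Q\<rparr>). twisted_act \<chi> v y = y}
      = {y\<in>carrier G. conj_aut G y Q = \<chi>}"
    using twisted_act_fixed_iff[OF kc] unfolding twisted_act_def by auto
  show ?thesis
    using twisted.sum_eq_sum_fixed_points_char_p[OF _ prime_p char_k finite_G] card_Q
      invariant fixed by simp
qed

lemma coeffs_fam_mult_apply:
  assumes x: "x \<in> NK G N Q"
  shows "coeffs (fam_mult G N Q F H) x = (\<Sum>pr\<in>Pairs (conj_aut G x Q).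
      \<Sum>y\<in>carrier G. res (F (fst pr) y) * res (H (snd pr) (inv y \<otimes> x)))"
  using x NK_carrier[OF x]
  by (simp add: coeffs_def fam_mult_eq gconv_def residue_map_sum[OF residue_res]
      residue_map_mult[OF residue_res])

lemma conj_aut_fibre_eq:
  assumes x: "x \<in> carrier G" and \<chi>: "\<chi> \<in> K" and \<omega>: "\<omega> \<in> K"
    and cp: "compose Q \<chi> \<omega> = conj_aut G x Q"
  shows "{y\<in>carrier G. conj_aut G y Q = \<chi>} = {y. y \<in> NK G N Q \<and> inv y \<otimes> x \<in> NK G N Q
      \<and> (conj_aut G y Q, conj_aut G (inv y \<otimes> x) Q) = (\<chi>, \<omega>)}"
proof (intro equalityI subsetI)
  fix y assume "y \<in> {y\<in>carrier G. conj_aut G y Q = \<chi>}"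
  hence y: "y \<in> carrier G" "conj_aut G y Q = \<chi>" by auto
  have "conj_aut G (inv y \<otimes> x) Q = \<omega>" using conj_aut_quotient[OF x y(1) \<omega>] cp y(2) by simp
  thus "y \<in> {y. y \<in> NK G N Q \<and> inv y \<otimes> x \<in> NK G N Q
      \<and> (conj_aut G y Q, conj_aut G (inv y \<otimes> x) Q) = (\<chi>, \<omega>)}"
    using NK_iff y \<chi> \<omega> x by simp
qed (use NK_carrier in auto)

lemma conj_aut_pair_in_Pairs:
  assumes x: "x \<in> carrier G" and y: "y \<in> NK G N Q" "inv y \<otimes> x \<in> NK G N Q"
  shows "(conj_aut G y Q, conj_aut G (inv y \<otimes> x) Q) \<in> Pairs (conj_aut G x Q)"
proof -
  have "compose Q (conj_aut G y Q) (conj_aut G (inv y \<otimes> x) Q) = conj_aut G x Q"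
    using conj_aut_compose[of y "inv y \<otimes> x"] y NK_iff x by auto
  thus ?thesis using y NK_iff by auto
qed

lemma coeffs_fam_mult:
  assumes F: "F \<in> br_fam G N Q" and H: "H \<in> br_fam G N Q"
  shows "coeffs (fam_mult G N Q F H) = kconv G N Q (coeffs F) (coeffs H)"
proof
  fix x
  show "coeffs (fam_mult G N Q F H) x = kconv G N Q (coeffs F) (coeffs H) x"
  proof (cases "x \<in> NK G N Q")
    case False thus ?thesis unfolding coeffs_def kconv_def by simp
  next
    case xN: True
    have xc: "x \<in> carrier G" using NK_carrier[OF xN] .
    define S where "S = {y \<in> NK G N Q. inv y \<otimes> x \<in> NK G N Q}"
    define pair where "pair y = (conj_aut G y Q, conj_aut G (inv y \<otimes> x) Q)" for y
    let ?term = "\<lambda>y. coeffs F y * coeffs H (inv y \<otimes> x)"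
    have "coeffs (fam_mult G N Q F H) x = (\<Sum>pr\<in>Pairs (conj_aut G x Q).
        \<Sum>y\<in>{y\<in>carrier G. conj_aut G y Q = fst pr}. res (F (fst pr) y) * res (H (snd pr) (inv y \<otimes> x)))"
      unfolding coeffs_fam_mult_apply[OF xN] using F H xc
      by (intro sum.cong refl residue_conv_sum_eq_fibre_sum) (auto simp: br_fam_def)
    also have "\<dots> = (\<Sum>pr\<in>Pairs (conj_aut G x Q). \<Sum>y\<in>{y \<in> S. pair y = pr}. ?term y)"
    proof (rule sum.cong[OF refl])
      fix pr assume "pr \<in> Pairs (conj_aut G x Q)"
      then obtain \<chi> \<omega> where pr: "pr = (\<chi>, \<omega>)" "\<chi> \<in> K" "\<omega> \<in> K" "compose Q \<chi> \<omega> = conj_aut G x Q"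
        by auto
      have "{y\<in>carrier G. conj_aut G y Q = \<chi>} = {y \<in> S. pair y = pr}"
        unfolding conj_aut_fibre_eq[OF xc pr(2-4)] S_def pair_def pr(1) by auto
      thus "(\<Sum>y\<in>{y\<in>carrier G. conj_aut G y Q = fst pr}. res (F (fst pr) y) * res (H (snd pr) (inv y \<otimes> x)))
          = (\<Sum>y\<in>{y \<in> S. pair y = pr}. ?term y)"
        unfolding pr(1) by (intro sum.cong) (auto simp: S_def pair_def coeffs_def)
    qed
    also have "\<dots> = (\<Sum>y\<in>S. ?term y)"
    proof (rule sum.group[OF _ finite_Pairs])
      show "finite S" unfolding S_def using finite_NK by simp
      show "pair ` S \<subseteq> Pairs (conj_aut G x Q)"
        unfolding S_def pair_def using conj_aut_pair_in_Pairs[OF xc] by blast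
    qed
    also have "\<dots> = (\<Sum>y\<in>NK G N Q. ?term y)"
      by (rule sum.mono_neutral_left[OF finite_NK]) (auto simp: S_def coeffs_def)
    also have "\<dots> = kconv G N Q (coeffs F) (coeffs H) x" unfolding kconv_def using xN by simp
    finally show ?thesis .
  qed
qed

lemma psi_kconv:
  assumes f: "f \<in> kNK G N Q" and h: "h \<in> kNK G N Q" and F: "F \<in> br_fam G N Q"
    and H: "H \<in> br_fam G N Q" and e1: "psi f = br_cls G N Q F" and e2: "psi h = br_cls G N Q H"
  shows "psi (kconv G N Q f h) = br_cls G N Q (fam_mult G N Q F H)"
  using coeffs_eq_if_psi_eq[OF f F e1] coeffs_eq_if_psi_eq[OF h H e2] coeffs_fam_mult[OF F H]
    br_cls_eq_psi_coeffs[OF fam_mult_in_br_fam[OF F H]] by simp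

end

theorem proposition5p2:
  fixes G :: "('g, 'b) monoid_scheme" and N Q :: "'g set" and p :: nat
    and res :: "'o::idom \<Rightarrow> 'k::field"
  assumes O_cdvr: "complete_dvr TYPE('o)" and O_char0: "CHAR('o) = 0"
    and res: "residue_map res"
    and p: "prime p" and k_char: "CHAR('k) = p"
    and G: "group G" "finite (carrier G)"
    and N: "N \<lhd> G"
    and Q: "subgroup Q G" "\<exists>n. card Q = p ^ n"
  shows "\<exists>\<psi> :: ('g \<Rightarrow> 'k) \<Rightarrow> (('g \<Rightarrow> 'g) \<Rightarrow> ('g \<Rightarrow> 'o) set).
     \<comment> \<open>bijection of the underlying sets\<close>
     bij_betw \<psi> (kNK G N Q) (ext_brauer G N Q)
     \<comment> \<open>k-linearity (k acting through res : O -> k)\<close>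
   \<and> (\<forall>f\<in>kNK G N Q. \<forall>h\<in>kNK G N Q. \<forall>F\<in>br_fam G N Q. \<forall>H\<in>br_fam G N Q.
        \<psi> f = br_cls G N Q F \<longrightarrow> \<psi> h = br_cls G N Q H \<longrightarrow>
          \<psi> (\<lambda>x. f x + h x) = br_cls G N Q (\<lambda>\<phi> g. F \<phi> g + H \<phi> g))
   \<and> (\<forall>c. \<forall>f\<in>kNK G N Q. \<forall>F\<in>br_fam G N Q.
        \<psi> f = br_cls G N Q F \<longrightarrow>
          \<psi> (\<lambda>x. res c * f x) = br_cls G N Q (\<lambda>\<phi> g. c * F \<phi> g))
     \<comment> \<open>multiplicativity\<close>
   \<and> (\<forall>f\<in>kNK G N Q. \<forall>h\<in>kNK G N Q. \<forall>F\<in>br_fam G N Q. \<forall>H\<in>br_fam G N Q.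
        \<psi> f = br_cls G N Q F \<longrightarrow> \<psi> h = br_cls G N Q H \<longrightarrow>
          \<psi> (kconv G N Q f h) = br_cls G N Q (fam_mult G N Q F H))
     \<comment> \<open>compatibility with the N_G^K(Q)/C_N(Q)-gradings\<close>
   \<and> (\<forall>z\<in>NK G N Q. \<psi> ` kNK_comp G N Q z = ext_brauer_comp G N Q z)
     \<comment> \<open>compatibility with the N_G^K(Q)-interior structures\<close>
   \<and> (\<forall>x\<in>NK G N Q. \<psi> (gdelta x) =
        br_cls G N Q (\<lambda>\<phi>. if \<phi> = conj_aut G x Q then gdelta x else (\<lambda>_. 0)))
     \<comment> \<open>compatibility with the N_G(Q)-actions\<close>
   \<and> (\<forall>y\<in>normalizer G Q. \<forall>f\<in>kNK G N Q. \<forall>F\<in>br_fam G N Q.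
        \<psi> f = br_cls G N Q F \<longrightarrow>
          \<psi> (kact G N Q y f) = br_cls G N Q (fam_act G Q y F))"
proof -
  obtain n where n: "card Q = p ^ n" using Q(2) by blast
  interpret ext_brauer_setting G N Q p n res
    using G N Q(1) n p res k_char by (simp add: ext_brauer_setting_def ext_brauer_setting_axioms_def)
  show ?thesis
    by (intro exI[of _ psi] conjI)
      (use bij_betw_psi psi_add psi_smult psi_kconv psi_image_kNK_comp psi_gdelta psi_kact in blast)+
qed

end
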